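(* Consider the quantum walk on the half line induced by the birth–death chain with parameters $(p_j,q_j,r_j)_{j\ge0}$, and assume the chain is positive recurrent, i.e. $C_R<\infty$. Define $$\pi(j)=\frac{1}{1+C_R}\Big\{\delta_0(j)+(1-\delta_0(j))\frac{p_0\cdots p_{j-1}}{q_1\cdots q_j}\Big\},\quad j\ge0.$$ Then for every $j\ge0$ and every unit vector $\Psi_0=\sum_{k\ge0:|k-j|\le1}\alpha_k\delta_{(k,j)}\in\ell^2(A)$, and every $i\ge0$, $$\overline{\mu}^{(\Psi_0)}_\infty(i)\ \ge\ |\langle a_j,\Psi_0\rangle|^2\,\pi(i)\,\pi(j).$$ In particular, for $\Psi_0=a_j$ one has $\overline{\mu}^{(\Psi_0)}_\infty(i)>0$ for all $i$ (localization).
   Context: Half-line setting: $V=\mathbb{Z}_+=\{0,1,2,\dots\}$, with parameters $p_j,q_j,r_j\ge0$, $p_j+q_j+r_j=1$, $q_0=0$, $p_j>0$ for $j\ge0$, $q_j>0$ for $j\ge1$; from $j$ the walker moves to $j+1$, $j-1$, $j$ with probabilities $p_j,q_j,r_j$. The arc set $A$ consists of $(j+1,j)$ for $j\ge0$ (denoted $|j;R\rangle$), $(j-1,j)$ for $j\ge1$ (denoted $|j;L\rangle$), and the self loop arc $(j,j)$ whenever $r_j>0$ (denoted $|j;O\rangle$); arc $(u,v)$ goes from $v$ to $u$. The shift $S$ on $\ell^2(A)$ swaps $\delta_{(u,v)}\leftrightarrow\delta_{(v,u)}$, i.e. $|j;R\rangle\leftrightarrow|j+1;L\rangle$ and fixes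 $|j;O\rangle$. $a_j=\sqrt{q_j}|j;L\rangle+\sqrt{r_j}|j;O\rangle+\sqrt{p_j}|j;R\rangle$ (terms with zero coefficient omitted). $\Pi_A$ is the orthogonal projection onto the closed span of $\{a_j\}$, $C=2\Pi_A-I$, $U=SC$. For a unit $\Psi_0\in\ell^2(A)$, $P(X_t=i)=\sum_{J}|\langle i;J|U^t\Psi_0\rangle|^2$ (sum over the arcs out of $i$) and $\overline{\mu}^{(\Psi_0)}_\infty(i)=\lim_{T\to\infty}\frac1T\sum_{t=0}^{T-1}P(X_t=i)$. $C_R=\sum_{j\ge1}\frac{p_0\cdots p_{j-1}}{q_1\cdots q_j}$. *)

theory Defs
  imports "HOL-Analysis.Analysis"
begin

text \<open>Arcs of the half-line graph. Rarc j = (j+1,j) = |j;R>, Larc j = (j-1,j) = |j;L>,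
  Oarc j = (j,j) = |j;O>. An arc (u,v) goes from v to u, so each of these arcs has origin j.\<close>
datatype arc = Rarc nat | Larc nat | Oarc nat

fun origin :: "arc \<Rightarrow> nat" where
  "origin (Rarc j) = j" | "origin (Larc j) = j" | "origin (Oarc j) = j"

fun inA :: "(nat \<Rightarrow> real) \<Rightarrow> arc \<Rightarrow> bool" where
  "inA r (Rarc j) = True" | "inA r (Larc j) = (1 \<le> j)" | "inA r (Oarc j) = (0 < r j)"

definition in_l2 :: "(nat \<Rightarrow> real) \<Rightarrow> (arc \<Rightarrow> complex) \<Rightarrow> bool" where
  "in_l2 r f \<longleftrightarrow> (\<forall>a. \<not> inA r a \<longrightarrow> f a = 0) \<and> (\<lambda>a. (cmod (f a))^2) summable_on UNIV"

definition l2_inner :: "(arc \<Rightarrow> complex) \<Rightarrow> (arc \<Rightarrow> complex) \<Rightarrow> complex" where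
  "l2_inner f g = infsum (\<lambda>a. cnj (f a) * g a) UNIV"

definition l2_norm :: "(arc \<Rightarrow> complex) \<Rightarrow> real" where
  "l2_norm f = sqrt (infsum (\<lambda>a. (cmod (f a))^2) UNIV)"

fun coef :: "(nat \<Rightarrow> real) \<Rightarrow> (nat \<Rightarrow> real) \<Rightarrow> (nat \<Rightarrow> real) \<Rightarrow> arc \<Rightarrow> real" where
  "coef p q r (Rarc j) = sqrt (p j)"
| "coef p q r (Larc j) = sqrt (q j)"
| "coef p q r (Oarc j) = sqrt (r j)"

text \<open>a_j = sqrt q_j |j;L> + sqrt r_j |j;O> + sqrt p_j |j;R> (only arcs of A).\<close>
definition avec :: "(nat \<Rightarrow> real) \<Rightarrow> (nat \<Rightarrow> real) \<Rightarrow> (nat \<Rightarrow> real) \<Rightarrow> nat \<Rightarrow> arc \<Rightarrow> complex" where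
  "avec p q r j = (\<lambda>a. if origin a = j \<and> inA r a then complex_of_real (coef p q r a) else 0)"

definition closed_span_a :: "(nat \<Rightarrow> real) \<Rightarrow> (nat \<Rightarrow> real) \<Rightarrow> (nat \<Rightarrow> real) \<Rightarrow> (arc \<Rightarrow> complex) set" where
  "closed_span_a p q r = {\<phi>. in_l2 r \<phi> \<and>
     (\<forall>e>0. \<exists>F c. finite F \<and> l2_norm (\<lambda>a. \<phi> a - (\<Sum>j\<in>F. c j * avec p q r j a)) < e)}"

definition projA :: "(nat \<Rightarrow> real) \<Rightarrow> (nat \<Rightarrow> real) \<Rightarrow> (nat \<Rightarrow> real) \<Rightarrow> (arc \<Rightarrow> complex) \<Rightarrow> (arc \<Rightarrow> complex)" where
  "projA p q r \<psi> = (THE \<phi>. \<phi> \<in> closed_span_a p q r \<and>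
      (\<forall>v\<in>closed_span_a p q r. l2_inner v (\<lambda>a. \<psi> a - \<phi> a) = 0))"

definition coin :: "(nat \<Rightarrow> real) \<Rightarrow> (nat \<Rightarrow> real) \<Rightarrow> (nat \<Rightarrow> real) \<Rightarrow> (arc \<Rightarrow> complex) \<Rightarrow> (arc \<Rightarrow> complex)" where
  "coin p q r \<psi> = (\<lambda>a. 2 * projA p q r \<psi> a - \<psi> a)"

fun shift :: "(arc \<Rightarrow> complex) \<Rightarrow> arc \<Rightarrow> complex" where
  "shift \<psi> (Rarc j) = \<psi> (Larc (Suc j))"
| "shift \<psi> (Larc (Suc j)) = \<psi> (Rarc j)"
| "shift \<psi> (Larc 0) = 0"
| "shift \<psi> (Oarc j) = \<psi> (Oarc j)"

definition Uop :: "(nat \<Rightarrow> real) \<Rightarrow> (nat \<Rightarrow> real) \<Rightarrow> (nat \<Rightarrow> real) \<Rightarrow> (arc \<Rightarrow> complex) \<Rightarrow> (arc \<Rightarrow> complex)" where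
  "Uop p q r \<psi> = shift (coin p q r \<psi>)"

definition probX :: "(nat \<Rightarrow> real) \<Rightarrow> (nat \<Rightarrow> real) \<Rightarrow> (nat \<Rightarrow> real) \<Rightarrow> (arc \<Rightarrow> complex) \<Rightarrow> nat \<Rightarrow> nat \<Rightarrow> real" where
  "probX p q r \<Psi> t i = (\<Sum>a\<in>{a. origin a = i \<and> inA r a}. (cmod (((Uop p q r) ^^ t) \<Psi> a))^2)"

definition time_avg :: "(nat \<Rightarrow> real) \<Rightarrow> (nat \<Rightarrow> real) \<Rightarrow> (nat \<Rightarrow> real) \<Rightarrow> (arc \<Rightarrow> complex) \<Rightarrow> nat \<Rightarrow> nat \<Rightarrow> real" where
  "time_avg p q r \<Psi> i T = (\<Sum>t<T. probX p q r \<Psi> t i) / real T"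

definition wgt :: "(nat \<Rightarrow> real) \<Rightarrow> (nat \<Rightarrow> real) \<Rightarrow> nat \<Rightarrow> real" where
  "wgt p q j = (\<Prod>k<j. p k) / (\<Prod>k\<in>{1..j}. q k)"

definition C_R :: "(nat \<Rightarrow> real) \<Rightarrow> (nat \<Rightarrow> real) \<Rightarrow> real" where
  "C_R p q = (\<Sum>n. wgt p q (Suc n))"

definition pi_stat :: "(nat \<Rightarrow> real) \<Rightarrow> (nat \<Rightarrow> real) \<Rightarrow> nat \<Rightarrow> real" where
  "pi_stat p q j = (1 / (1 + C_R p q)) *
     ((if j = 0 then 1 else 0) + (1 - (if j = 0 then 1 else 0)) * wgt p q j)"

end

theory Submission
  imports Defs
begin

(* Let U = S C be the walk operator on l2(A), pi the stationary measure, and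
   Phi the vector that equals sqrt(pi(j)) a_j on the arcs out of every vertex j.  Then
   (1) U is a complex-linear contraction: C = 2 Pi_A - I is a reflection, S permutes arcs;
   (2) U Phi = Phi and <Phi, U w> = <Phi, w>: Phi lies in the closed span of the a_j, and by
       detailed balance of pi it takes equal values on mutually reversed arcs;
   (3) every fixed point of U is a multiple of Phi.
   The mean ergodic theorem (the Cesaro means of V^t x converge to a fixed vector of the
   contraction V) is used twice.  Applied to the tensor square U (x) conj U it shows that the
   time averages of |(U^t psi)(b)|^2 converge.  Applied to U itself, with (2) and (3), it
   shows that for z orthogonal to Phi the Cesaro means of U^t z tend to 0; writing
   psi = c Phi + z and expanding |c Phi(b) + (U^t z)(b)|^2 then bounds the limit below by
   |c|^2 |Phi(b)|^2.  Summing over the arcs out of i, and using <Phi, psi> = sqrt(pi(j))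
   <a_j, psi> for psi supported on the arcs out of j and |Phi| <= 1, gives the theorem. *)

section \<open>Square-summable functions\<close>

definition square_summable :: "('i \<Rightarrow> complex) \<Rightarrow> bool" where
  "square_summable f \<longleftrightarrow> (\<lambda>a. (cmod (f a))^2) summable_on UNIV"

definition fun_inner :: "('i \<Rightarrow> complex) \<Rightarrow> ('i \<Rightarrow> complex) \<Rightarrow> complex" where
  "fun_inner f g = infsum (\<lambda>a. cnj (f a) * g a) UNIV"

definition sqnorm :: "('i \<Rightarrow> complex) \<Rightarrow> real" where
  "sqnorm f = infsum (\<lambda>a. (cmod (f a))^2) UNIV"

lemma square_summable_zero [simp]: "square_summable (\<lambda>_. 0)"
  by (simp add: square_summable_def)

lemma sqnorm_nonneg: "sqnorm f \<ge> 0"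
  unfolding sqnorm_def by (rule infsum_nonneg) simp

text \<open>Uniformly bounded finite partial sums give square summability and a norm bound;
  this is how every new element of l2 is produced below.\<close>
lemma square_summable_bounded:
  assumes "\<And>F. finite F \<Longrightarrow> (\<Sum>a\<in>F. (cmod (f a))^2) \<le> B"
  shows "square_summable f" and "sqnorm f \<le> B"
proof -
  show summable: "square_summable f" unfolding square_summable_def
    by (rule nonneg_bdd_above_summable_on) (use assms in \<open>auto simp: bdd_above_def\<close>)
  show "sqnorm f \<le> B" unfolding sqnorm_def
    by (rule infsum_le_finite_sums) (use summable assms in \<open>auto simp: square_summable_def\<close>)
qed

lemma finite_sum_le_sqnorm:
  assumes "square_summable f" "finite F"
  shows "(\<Sum>a\<in>F. (cmod (f a))^2) \<le> sqnorm f"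
  unfolding sqnorm_def
  by (rule finite_sum_le_infsum) (use assms in \<open>auto simp: square_summable_def\<close>)

lemma infsum_finite_support:
  fixes f :: "'a \<Rightarrow> 'b::{comm_monoid_add,t2_space}"
  assumes "finite S" "\<And>a. a \<notin> S \<Longrightarrow> f a = 0"
  shows "infsum f UNIV = sum f S"
proof -
  have "infsum f UNIV = infsum f S" by (rule infsum_cong_neutral) (use assms in auto)
  thus ?thesis using assms by simp
qed

lemma square_summable_finite_support:
  assumes "finite S" "\<And>a. a \<notin> S \<Longrightarrow> f a = 0"
  shows "square_summable f"
proof -
  have "(\<lambda>a. (cmod (f a))^2) summable_on S" using assms(1) by simp
  moreover have "(\<lambda>a. (cmod (f a))^2) summable_on S \<longleftrightarrow> (\<lambda>a. (cmod (f a))^2) summable_on UNIV"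
    by (rule summable_on_cong_neutral) (use assms in auto)
  ultimately show ?thesis unfolding square_summable_def by simp
qed

lemma norm_sq_sum_le: "(cmod (x + y))^2 \<le> 2 * (cmod x)^2 + 2 * (cmod y)^2"
proof -
  have "(cmod (x + y))^2 \<le> (cmod x + cmod y)^2"
    by (intro power_mono norm_triangle_ineq) simp
  moreover have "0 \<le> (cmod x - cmod y)^2" by simp
  ultimately show ?thesis by (simp add: power2_eq_square algebra_simps)
qed

lemma square_summable_add:
  assumes "square_summable f" "square_summable g"
  shows "square_summable (\<lambda>a. f a + g a)"
  unfolding square_summable_def
proof (rule summable_on_comparison_test)
  show "(\<lambda>a. 2 * (cmod (f a))^2 + 2 * (cmod (g a))^2) summable_on UNIV"
    using assms unfolding square_summable_def by (intro summable_on_add summable_on_cmult_right)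
qed (auto intro: norm_sq_sum_le)

lemma square_summable_scale:
  assumes "square_summable f" shows "square_summable (\<lambda>a. c * f a)"
  using summable_on_cmult_right[OF assms[unfolded square_summable_def], of "(cmod c)^2"]
  by (simp add: square_summable_def norm_mult power_mult_distrib)

lemma square_summable_uminus: "square_summable f \<Longrightarrow> square_summable (\<lambda>a. - f a)"
  by (simp add: square_summable_def)

lemma square_summable_diff:
  assumes "square_summable f" "square_summable g" shows "square_summable (\<lambda>a. f a - g a)"
  using square_summable_add[OF assms(1) square_summable_uminus[OF assms(2)]] by simp

text \<open>The pointwise product of two square-summable functions is absolutely summable, since
  \<open>|x y| \<le> (|x|\<^sup>2 + |y|\<^sup>2)/2\<close>; hence the inner product is well defined.\<close>
lemma square_summable_product:
  assumes "square_summable f" "square_summable g"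
  shows "(\<lambda>a. cnj (f a) * g a) summable_on UNIV"
proof (rule abs_summable_summable)
  have bound: "norm (cnj x * y) \<le> ((cmod x)^2 + (cmod y)^2) * (1/2)" for x y :: complex
    using sum_squares_bound[of "cmod x" "cmod y"] by (simp add: norm_mult)
  show "(\<lambda>a. norm (cnj (f a) * g a)) summable_on UNIV"
  proof (rule summable_on_comparison_test)
    show "(\<lambda>a. ((cmod (f a))^2 + (cmod (g a))^2) * (1/2)) summable_on UNIV"
      using assms unfolding square_summable_def by (intro summable_on_add summable_on_cmult_left) auto
  qed (rule bound, rule norm_ge_zero)
qed

lemma cnj_mult_self: "cnj z * z = complex_of_real ((cmod z)^2)"
  by (subst complex_norm_square) (rule mult.commute)

lemma fun_inner_self:
  assumes "square_summable f" shows "fun_inner f f = of_real (sqnorm f)"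
proof -
  have "fun_inner f f = infsum (\<lambda>a. of_real ((cmod (f a))^2)) UNIV"
    unfolding fun_inner_def cnj_mult_self ..
  also have "\<dots> = of_real (sqnorm f)"
    unfolding sqnorm_def
    by (rule infsumI[OF has_sum_of_real[OF has_sum_infsum]])
      (use assms in \<open>simp add: square_summable_def\<close>)
  finally show ?thesis .
qed

lemma sqnorm_eq_0_iff:
  assumes "square_summable f" shows "sqnorm f = 0 \<longleftrightarrow> f = (\<lambda>_. 0)"
proof
  assume "sqnorm f = 0"
  hence "(cmod (f a))^2 = 0" for a
    using nonneg_infsum_le_0D[of "\<lambda>a. (cmod (f a))^2" UNIV] assms
    unfolding sqnorm_def square_summable_def by auto
  thus "f = (\<lambda>_. 0)" by auto
qed (simp add: sqnorm_def)

lemma fun_inner_add_left: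
  assumes "square_summable f" "square_summable g" "square_summable h"
  shows "fun_inner (\<lambda>a. f a + g a) h = fun_inner f h + fun_inner g h"
  using infsum_add[OF square_summable_product[OF assms(1,3)] square_summable_product[OF assms(2,3)]]
  by (simp add: fun_inner_def distrib_right)

lemma fun_inner_add_right:
  assumes "square_summable f" "square_summable g" "square_summable h"
  shows "fun_inner h (\<lambda>a. f a + g a) = fun_inner h f + fun_inner h g"
  using infsum_add[OF square_summable_product[OF assms(3,1)] square_summable_product[OF assms(3,2)]]
  by (simp add: fun_inner_def distrib_left)

lemma fun_inner_scale_left: "fun_inner (\<lambda>a. c * f a) g = cnj c * fun_inner f g"
  unfolding fun_inner_def by (subst infsum_cmult_right'[symmetric]) (simp add: algebra_simps)

lemma fun_inner_scale_right: "fun_inner f (\<lambda>a. c * g a) = c * fun_inner f g"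
  unfolding fun_inner_def by (subst infsum_cmult_right'[symmetric]) (simp add: algebra_simps)

lemma fun_inner_commute: "fun_inner g f = cnj (fun_inner f g)"
  unfolding fun_inner_def by (subst infsum_cnj[symmetric]) (simp add: mult.commute)

section \<open>The Hilbert space l2(I)\<close>

text \<open>Square-summable functions form a real inner product space whose inner product is the real
  part of the complex one; complex scalars are handled separately in a later section.\<close>
typedef 'i ell2 = "{f::'i \<Rightarrow> complex. square_summable f}" morphisms coords ell2_of
  by (rule exI[of _ "\<lambda>_. 0"]) simp

setup_lifting type_definition_ell2

instantiation ell2 :: (type) real_vector
begin
lift_definition zero_ell2 :: "'a ell2" is "\<lambda>_. 0" by simp
lift_definition plus_ell2 :: "'a ell2 \<Rightarrow> 'a ell2 \<Rightarrow> 'a ell2" is "\<lambda>f g a. f a + g a"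
  by (rule square_summable_add)
lift_definition uminus_ell2 :: "'a ell2 \<Rightarrow> 'a ell2" is "\<lambda>f a. - f a"
  by (rule square_summable_uminus)
lift_definition minus_ell2 :: "'a ell2 \<Rightarrow> 'a ell2 \<Rightarrow> 'a ell2" is "\<lambda>f g a. f a - g a"
  by (rule square_summable_diff)
lift_definition scaleR_ell2 :: "real \<Rightarrow> 'a ell2 \<Rightarrow> 'a ell2" is "\<lambda>r f a. complex_of_real r * f a"
  by (rule square_summable_scale)
instance
  by standard (transfer; simp add: algebra_simps)+
end

instantiation ell2 :: (type) real_inner
begin
lift_definition inner_ell2 :: "'a ell2 \<Rightarrow> 'a ell2 \<Rightarrow> real" is "\<lambda>f g. Re (fun_inner f g)" .
lift_definition norm_ell2 :: "'a ell2 \<Rightarrow> real" is "\<lambda>f. sqrt (sqnorm f)" .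
definition dist_ell2 :: "'a ell2 \<Rightarrow> 'a ell2 \<Rightarrow> real" where "dist_ell2 x y = norm (x - y)"
definition sgn_ell2 :: "'a ell2 \<Rightarrow> 'a ell2" where "sgn_ell2 x = x /\<^sub>R norm x"
definition uniformity_ell2 :: "('a ell2 \<times> 'a ell2) filter" where
  "uniformity_ell2 = (INF e\<in>{0<..}. principal {(x, y). dist x y < e})"
definition open_ell2 :: "'a ell2 set \<Rightarrow> bool" where
  "open_ell2 U = (\<forall>x\<in>U. \<forall>\<^sub>F (x', y) in uniformity. x' = x \<longrightarrow> y \<in> U)"
instance
proof
  fix a :: real and x y z :: "'a ell2"
  show "inner x y = inner y x" by transfer (metis fun_inner_commute complex_cnj(1) cnj.sel(1))
  show "inner (x + y) z = inner x z + inner y z" by transfer (simp add: fun_inner_add_left)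
  show "inner (a *\<^sub>R x) y = a * inner x y" by transfer (simp add: fun_inner_scale_left)
  show "0 \<le> inner x x" by transfer (simp add: fun_inner_self sqnorm_nonneg)
  show "(inner x x = 0) = (x = 0)" by transfer (simp add: fun_inner_self sqnorm_eq_0_iff)
  show "norm x = sqrt (inner x x)" by transfer (simp add: fun_inner_self)
qed (simp_all add: dist_ell2_def sgn_ell2_def uniformity_ell2_def open_ell2_def)
end

lemmas coords_simps [simp] =
  zero_ell2.rep_eq plus_ell2.rep_eq uminus_ell2.rep_eq minus_ell2.rep_eq scaleR_ell2.rep_eq

lemma square_summable_coords [simp]: "square_summable (coords x)"
  using coords by auto

lemma coords_ell2_of: "square_summable f \<Longrightarrow> coords (ell2_of f) = f"
  by (simp add: ell2_of_inverse)

lemma ell2_of_coords [simp]: "ell2_of (coords x) = x"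
  by (rule coords_inverse)

lemma ell2_eqI: "(\<And>a. coords x a = coords y a) \<Longrightarrow> x = y"
  by (metis coords_inject ext)

lemma norm_ell2_sqnorm: "norm x = sqrt (sqnorm (coords x))"
  by (simp add: norm_ell2.rep_eq)

lemma sqnorm_coords: "sqnorm (coords x) = (norm x)^2"
  by (simp add: norm_ell2_sqnorm sqnorm_nonneg)

lemma norm_coord_le: "cmod (coords x a) \<le> norm x"
proof -
  have "(cmod (coords x a))^2 \<le> (norm x)^2"
    using finite_sum_le_sqnorm[of "coords x" "{a}"] by (simp add: sqnorm_coords)
  thus ?thesis by (simp add: power2_le_iff_abs_le)
qed

text \<open>Each coordinate is a bounded (real-)linear functional; hence convergence in l2 implies
  coordinatewise convergence, and Cauchy sequences are coordinatewise Cauchy.\<close>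
lemma bounded_linear_coord: "bounded_linear (\<lambda>x. coords x a)"
  by (rule bounded_linear_intro[where K = 1]) (simp_all add: norm_coord_le scaleR_conv_of_real)

lemma coords_tendsto: "X \<longlonglongrightarrow> y \<Longrightarrow> (\<lambda>n. coords (X n) a) \<longlonglongrightarrow> coords y a"
  by (rule bounded_linear.tendsto[OF bounded_linear_coord])

text \<open>For a Cauchy sequence with coordinatewise limit \<open>g\<close>, eventually \<open>X n - g\<close> is
  square-summable of norm at most \<open>e\<close>: bound the finite partial sums of \<open>|X n - X m|\<^sup>2\<close>
  uniformly in \<open>m\<close> and let \<open>m\<close> tend to infinity.\<close>
lemma Cauchy_coordinatewise_limit_close:
  assumes C: "Cauchy X" and lim: "\<And>a. (\<lambda>m. coords (X m) a) \<longlonglongrightarrow> g a" and "e > 0"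
  shows "\<exists>M. \<forall>n\<ge>M. square_summable (\<lambda>a. coords (X n) a - g a)
                      \<and> sqnorm (\<lambda>a. coords (X n) a - g a) \<le> e^2"
proof -
  obtain M where M: "\<And>m n. m \<ge> M \<Longrightarrow> n \<ge> M \<Longrightarrow> norm (X n - X m) < e"
    using metric_CauchyD[OF C \<open>e > 0\<close>] by (metis dist_norm)
  have bound: "(\<Sum>a\<in>F. (cmod (coords (X n) a - g a))^2) \<le> e^2" if "n \<ge> M" "finite F" for n F
  proof (rule tendsto_le[OF trivial_limit_sequentially tendsto_const])
    show "(\<lambda>m. \<Sum>a\<in>F. (cmod (coords (X n) a - coords (X m) a))^2)
        \<longlonglongrightarrow> (\<Sum>a\<in>F. (cmod (coords (X n) a - g a))^2)"
      by (intro tendsto_intros lim)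
    show "\<forall>\<^sub>F m in sequentially. (\<Sum>a\<in>F. (cmod (coords (X n) a - coords (X m) a))^2) \<le> e^2"
    proof (rule eventually_sequentiallyI[of M])
      fix m assume "M \<le> m"
      have "(\<Sum>a\<in>F. (cmod (coords (X n) a - coords (X m) a))^2) \<le> (norm (X n - X m))^2"
        using finite_sum_le_sqnorm[OF square_summable_coords \<open>finite F\<close>, of "X n - X m"]
          sqnorm_coords[of "X n - X m"] by simp
      also have "\<dots> \<le> e^2" using M[OF \<open>M \<le> m\<close> \<open>n \<ge> M\<close>] by (simp add: power_mono)
      finally show "(\<Sum>a\<in>F. (cmod (coords (X n) a - coords (X m) a))^2) \<le> e^2" .
    qed
  qed
  show ?thesis
  proof (intro exI allI impI)
    fix n assume "M \<le> n"
    from square_summable_bounded[OF bound[OF this]]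
    show "square_summable (\<lambda>a. coords (X n) a - g a) \<and> sqnorm (\<lambda>a. coords (X n) a - g a) \<le> e^2"
      by simp
  qed
qed

instance ell2 :: (type) complete_space
proof
  fix X :: "nat \<Rightarrow> 'a ell2"
  assume C: "Cauchy X"
  have "convergent (\<lambda>n. coords (X n) a)" for a
    using bounded_linear.Cauchy[OF bounded_linear_coord C] by (simp add: Cauchy_convergent_iff)
  then obtain g where g: "\<And>a. (\<lambda>n. coords (X n) a) \<longlonglongrightarrow> g a"
    unfolding convergent_def by metis
  note close = Cauchy_coordinatewise_limit_close[OF C g]
  obtain N where "square_summable (\<lambda>a. coords (X N) a - g a)" using close[of 1] by auto
  hence "square_summable g"
    using square_summable_diff[OF square_summable_coords[of "X N"]] by fastforce
  hence norm_eq: "norm (X n - ell2_of g) = sqrt (sqnorm (\<lambda>a. coords (X n) a - g a))" for n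
    by (simp add: norm_ell2_sqnorm coords_ell2_of)
  have "X \<longlonglongrightarrow> ell2_of g"
  proof (rule LIMSEQ_I)
    fix e :: real assume "0 < e"
    then obtain N where N: "\<forall>n\<ge>N. sqnorm (\<lambda>a. coords (X n) a - g a) \<le> (e/2)^2"
      using close[of "e/2"] by auto
    have "norm (X n - ell2_of g) \<le> e/2" if "n \<ge> N" for n
      unfolding norm_eq using N that \<open>0 < e\<close> by (intro real_le_lsqrt) auto
    hence "\<forall>n\<ge>N. norm (X n - ell2_of g) \<le> e/2" by blast
    moreover have "e/2 < e" using \<open>0 < e\<close> by simp
    ultimately show "\<exists>N. \<forall>n\<ge>N. norm (X n - ell2_of g) < e"
      by (intro exI[of _ N]) (auto intro: order_le_less_trans)
  qed
  thus "convergent X" by (auto simp: convergent_def)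
qed

section \<open>Projections and the mean ergodic theorem in real Hilbert spaces\<close>

lemma subspace_closure:
  fixes S :: "'a::real_normed_vector set"
  assumes "subspace S" shows "subspace (closure S)"
proof -
  have add: "x + y \<in> closure S" if xy: "x \<in> closure S" "y \<in> closure S" for x y
  proof -
    obtain f g where "\<forall>n. f n \<in> S" "f \<longlonglongrightarrow> x" "\<forall>n. g n \<in> S" "g \<longlonglongrightarrow> y"
      using xy unfolding closure_sequential by metis
    thus ?thesis unfolding closure_sequential using assms
      by (intro exI[of _ "\<lambda>n. f n + g n"]) (auto intro: tendsto_add subspace_add)
  qed
  have scale: "c *\<^sub>R x \<in> closure S" if x: "x \<in> closure S" for c x
  proof -
    obtain f where "\<forall>n. f n \<in> S" "f \<longlonglongrightarrow> x" using x unfolding closure_sequential by metis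
    thus ?thesis unfolding closure_sequential using assms
      by (intro exI[of _ "\<lambda>n. c *\<^sub>R f n"]) (auto intro: tendsto_scaleR subspace_scale)
  qed
  have "0 \<in> closure S" using assms closure_subset subspace_0 by blast
  with add scale show ?thesis unfolding subspace_def by blast
qed

lemma parallelogram_law:
  fixes a b :: "'a::real_inner"
  shows "(norm (a + b))^2 + (norm (a - b))^2 = 2 * (norm a)^2 + 2 * (norm b)^2"
  by (simp add: power2_norm_eq_inner inner_add_left inner_add_right inner_diff_left
      inner_diff_right inner_commute)

lemma parallelogram_midpoint:
  fixes x s t :: "'a::real_inner"
  shows "(norm (s - t))^2
    = 2 * (norm (x - s))^2 + 2 * (norm (x - t))^2 - 4 * (norm (x - (1/2) *\<^sub>R (s + t)))^2"
proof -
  have "x - (1/2) *\<^sub>R (s + t) = (1/2) *\<^sub>R ((x - s) + (x - t))"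
    by (simp add: scaleR_add_right scaleR_diff_right flip: scaleR_add_left)
  hence "4 * (norm (x - (1/2) *\<^sub>R (s + t)))^2 = (norm ((x - s) + (x - t)))^2"
    by (simp add: power_divide)
  moreover have "(norm ((x - s) - (x - t)))^2 = (norm (s - t))^2" by (simp add: norm_minus_commute)
  ultimately show ?thesis using parallelogram_law[of "x - s" "x - t"] by linarith
qed

text \<open>A minimising sequence for the distance from \<open>x\<close> to a subspace is Cauchy: by the
  parallelogram law \<open>|s m - s n|\<^sup>2 \<le> 2|x - s m|\<^sup>2 + 2|x - s n|\<^sup>2 - 4 d\<^sup>2\<close>.\<close>
lemma minimizing_sequence_Cauchy:
  fixes S :: "'a::real_inner set"
  assumes sub: "subspace S" and sS: "\<And>n. s n \<in> S"
    and d_le: "\<And>y. y \<in> S \<Longrightarrow> d \<le> norm (x - y)" and "0 \<le> d"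
    and sq_lim: "(\<lambda>n. (norm (x - s n))^2) \<longlonglongrightarrow> d^2"
  shows "Cauchy s"
proof (rule metric_CauchyI)
  fix e :: real assume "e > 0"
  then obtain N where N: "\<And>n. n \<ge> N \<Longrightarrow> (norm (x - s n))^2 < d^2 + e^2 / 4"
    using order_tendstoD(2)[OF sq_lim, of "d^2 + e^2/4"] by (auto simp: eventually_sequentially)
  have "dist (s m) (s n) < e" if "m \<ge> N" "n \<ge> N" for m n
  proof -
    have "(1/2) *\<^sub>R (s m + s n) \<in> S" using sub sS by (simp add: subspace_add subspace_scale)
    hence "d^2 \<le> (norm (x - (1/2) *\<^sub>R (s m + s n)))^2"
      using d_le \<open>0 \<le> d\<close> by (simp add: power_mono)
    hence "(norm (s m - s n))^2 < e^2"
      using parallelogram_midpoint[of "s m" "s n" x] N[OF that(1)] N[OF that(2)] by linarith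
    thus ?thesis using \<open>e > 0\<close> by (simp add: dist_norm power_less_imp_less_base)
  qed
  thus "\<exists>M. \<forall>m\<ge>M. \<forall>n\<ge>M. dist (s m) (s n) < e" by blast
qed

lemma closest_point_in_closed_subspace:
  fixes S :: "'a::{real_inner,complete_space} set"
  assumes sub: "subspace S" and cl: "closed S"
  obtains p where "p \<in> S" "\<And>s. s \<in> S \<Longrightarrow> norm (x - p) \<le> norm (x - s)"
proof -
  define d where "d = infdist x S"
  have ne: "S \<noteq> {}" using sub subspace_0 by blast
  have d_le: "d \<le> norm (x - s)" if "s \<in> S" for s
    using infdist_le[OF that, of x] by (simp add: d_def dist_norm)
  have "\<exists>s\<in>S. dist x s < d + 1 / (real n + 1)" for n
  proof -
    have "(INF a\<in>S. dist x a) < d + 1 / (real n + 1)" by (simp add: d_def infdist_notempty[OF ne])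
    thus ?thesis by (subst (asm) cINF_less_iff[OF ne]) auto
  qed
  then obtain s where sS: "\<And>n. s n \<in> S" and s_close: "\<And>n. norm (x - s n) < d + 1 / (real n + 1)"
    by (metis dist_norm)
  have norm_lim: "(\<lambda>n. norm (x - s n)) \<longlonglongrightarrow> d"
  proof (rule tendsto_sandwich[of "\<lambda>_. d" _ _ "\<lambda>n. d + 1 / (real n + 1)"])
    show "(\<lambda>n. d + 1 / (real n + 1)) \<longlonglongrightarrow> d"
      using tendsto_add[OF tendsto_const[of d] LIMSEQ_Suc[OF lim_const_over_n[of 1]]]
      by (simp add: add.commute)
    show "\<forall>\<^sub>F n in sequentially. d \<le> norm (x - s n)"
      using d_le sS by (simp add: always_eventually)
    show "\<forall>\<^sub>F n in sequentially. norm (x - s n) \<le> d + 1 / (real n + 1)"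
      using s_close by (simp add: always_eventually less_imp_le)
  qed simp
  have "Cauchy s"
    using minimizing_sequence_Cauchy[OF sub sS d_le] infdist_nonneg[of x S] norm_lim
    by (simp add: d_def tendsto_power)
  then obtain p where p: "s \<longlonglongrightarrow> p" by (auto simp: Cauchy_convergent_iff convergent_def)
  have "p \<in> S" using closed_sequentially[OF cl] sS p by blast
  moreover have "norm (x - p) = d"
    using tendsto_unique[OF _ tendsto_norm[OF tendsto_diff[OF tendsto_const p]] norm_lim] by simp
  ultimately show ?thesis using d_le that by auto
qed

lemma closest_point_orthogonal:
  fixes S :: "'a::real_inner set"
  assumes sub: "subspace S" and pS: "p \<in> S" and vS: "v \<in> S"
    and closest: "\<And>s. s \<in> S \<Longrightarrow> norm (x - p) \<le> norm (x - s)"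
  shows "inner v (x - p) = 0"
proof (rule ccontr)
  define c where "c = inner v (x - p)"
  assume "inner v (x - p) \<noteq> 0"
  hence c0: "c \<noteq> 0" and v0: "v \<noteq> 0" by (auto simp: c_def)
  define t where "t = c / (norm v)^2"
  have "p + t *\<^sub>R v \<in> S" using sub pS vS by (simp add: subspace_add subspace_scale)
  hence "(norm (x - p))^2 \<le> (norm ((x - p) - t *\<^sub>R v))^2"
    using closest by (simp add: power_mono algebra_simps)
  also have "\<dots> = (norm (x - p))^2 - 2 * t * c + t^2 * (norm v)^2"
    unfolding c_def power2_norm_eq_inner
    by (simp add: inner_diff_left inner_diff_right inner_commute[of x v] inner_commute[of p v]
        power2_eq_square algebra_simps)
  also have "\<dots> = (norm (x - p))^2 - c^2 / (norm v)^2"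
    using v0 by (simp add: t_def power2_eq_square field_simps)
  finally have "c^2 / (norm v)^2 \<le> 0" by simp
  moreover have "c^2 / (norm v)^2 > 0" using c0 v0 by simp
  ultimately show False by linarith
qed

theorem orthogonal_projection_exists:
  fixes S :: "'a::{real_inner,complete_space} set"
  assumes "subspace S" "closed S"
  shows "\<exists>p\<in>S. \<forall>v\<in>S. inner v (x - p) = 0"
  using closest_point_in_closed_subspace[OF assms, of x] closest_point_orthogonal[OF assms(1)] by metis

definition cesaro_mean :: "('a::real_vector \<Rightarrow> 'a) \<Rightarrow> nat \<Rightarrow> 'a \<Rightarrow> 'a" where
  "cesaro_mean V T x = (1 / real T) *\<^sub>R (\<Sum>t<T. (V ^^ t) x)"

locale linear_contraction =
  fixes V :: "'a::{real_inner,complete_space} \<Rightarrow> 'a"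
  assumes linear: "linear V" and contractive: "norm (V x) \<le> norm x"
begin

lemma power_linear: "linear (V ^^ n)"
proof (induction n)
  case (Suc n) thus ?case unfolding funpow.simps(2) by (rule linear_compose[OF _ linear])
qed (auto intro: linearI)

lemma power_contractive: "norm ((V ^^ n) x) \<le> norm x"
  by (induction n) (auto intro: order_trans[OF contractive])

lemma cesaro_mean_add: "cesaro_mean V T (x + y) = cesaro_mean V T x + cesaro_mean V T y"
  by (simp add: cesaro_mean_def linear_add[OF power_linear] sum.distrib scaleR_add_right)

lemma norm_cesaro_mean: "norm (cesaro_mean V T x) \<le> norm x"
proof (cases "T = 0")
  case False
  have "norm (\<Sum>t<T. (V ^^ t) x) \<le> (\<Sum>t<T. norm x)"
    by (rule order_trans[OF norm_sum sum_mono[OF power_contractive]])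
  thus ?thesis using False by (simp add: cesaro_mean_def field_simps)
qed (simp add: cesaro_mean_def)

text \<open>A vector orthogonal to all coboundaries \<open>w - V w\<close> is fixed: then
  \<open>\<langle>V y, y\<rangle> = |y|\<^sup>2 \<ge> |V y|\<^sup>2\<close>, which forces \<open>|V y - y| = 0\<close>.\<close>
lemma fixed_if_orthogonal_to_coboundaries:
  assumes "\<And>w. inner (w - V w) y = 0"
  shows "V y = y"
proof -
  have "inner (V y) y = (norm y)^2"
    using assms[of y] by (simp add: inner_diff_left power2_norm_eq_inner)
  moreover have "(norm (V y))^2 \<le> (norm y)^2" using contractive[of y] by (simp add: power_mono)
  ultimately have "(norm (V y - y))^2 \<le> 0"
    by (simp add: power2_norm_eq_inner inner_diff_left inner_diff_right inner_commute)
  thus ?thesis by simp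
qed

text \<open>The Cesaro means of a coboundary telescope, so they are \<open>O(1/T)\<close>.\<close>
lemma cesaro_mean_coboundary: "cesaro_mean V T (w - V w) = (1 / real T) *\<^sub>R (w - (V ^^ T) w)"
proof -
  have "(\<Sum>t<T. (V ^^ t) (w - V w)) = (\<Sum>t<T. (V ^^ t) w - (V ^^ Suc t) w)"
    by (intro sum.cong refl) (simp add: linear_diff[OF power_linear] funpow_swap1)
  also have "\<dots> = w - (V ^^ T) w" by (subst sum_lessThan_telescope') simp
  finally show ?thesis by (simp add: cesaro_mean_def)
qed

lemma cesaro_mean_coboundary_tendsto: "(\<lambda>T. cesaro_mean V T (w - V w)) \<longlonglongrightarrow> 0"
proof (rule tendsto_sandwich[of "\<lambda>_. 0" _ _ "\<lambda>T. 2 * norm w / real T", THEN tendsto_norm_zero_cancel])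
  have "norm (w - (V ^^ T) w) \<le> 2 * norm w" for T
    using norm_triangle_ineq4[of w "(V ^^ T) w"] power_contractive[of T w] by simp
  thus "\<forall>\<^sub>F T in sequentially. norm (cesaro_mean V T (w - V w)) \<le> 2 * norm w / real T"
    by (simp add: cesaro_mean_coboundary divide_right_mono)
  show "(\<lambda>T. 2 * norm w / real T) \<longlonglongrightarrow> 0" by (rule lim_const_over_n)
qed auto

text \<open>Since the Cesaro means are uniformly bounded linear maps, they also tend to 0 on the
  closure of the coboundaries.\<close>
lemma cesaro_mean_closure_coboundaries:
  assumes "q \<in> closure (range (\<lambda>w. w - V w))"
  shows "(\<lambda>T. cesaro_mean V T q) \<longlonglongrightarrow> 0"
proof (rule LIMSEQ_I)
  fix e :: real assume "e > 0"
  then obtain g where "g \<in> range (\<lambda>w. w - V w)" and g: "dist g q < e / 2"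
    using assms unfolding closure_approachable by (meson half_gt_zero)
  then obtain w where gw: "g = w - V w" by blast
  from g have qg: "norm (q - g) < e / 2" by (simp add: dist_norm norm_minus_commute)
  obtain N where N: "\<And>T. T \<ge> N \<Longrightarrow> norm (cesaro_mean V T g) < e / 2"
    using LIMSEQ_D[OF cesaro_mean_coboundary_tendsto, of "e/2" w] \<open>e > 0\<close> gw by auto
  have "norm (cesaro_mean V T q) < e" if "T \<ge> N" for T
  proof -
    have "cesaro_mean V T q = cesaro_mean V T (q - g) + cesaro_mean V T g"
      by (simp flip: cesaro_mean_add)
    hence "norm (cesaro_mean V T q) \<le> norm (cesaro_mean V T (q - g)) + norm (cesaro_mean V T g)"
      by (simp add: norm_triangle_ineq)
    also have "\<dots> < e / 2 + e / 2"
      using order_le_less_trans[OF norm_cesaro_mean qg] N[OF that]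
      by (rule add_strict_mono)
    finally show ?thesis by simp
  qed
  thus "\<exists>N. \<forall>T\<ge>N. norm (cesaro_mean V T q - 0) < e" by auto
qed

theorem mean_ergodic:
  "\<exists>y. V y = y \<and> x - y \<in> closure (range (\<lambda>w. w - V w)) \<and> (\<lambda>T. cesaro_mean V T x) \<longlonglongrightarrow> y"
proof -
  define R where "R = range (\<lambda>w. w - V w)"
  have "linear (\<lambda>w. w - V w)"
    by (rule linearI) (simp_all add: linear_add[OF linear] linear_scale[OF linear] algebra_simps)
  hence "subspace R" unfolding R_def by (rule linear_subspace_image) simp
  then obtain q where qR: "q \<in> closure R" and q_orth: "\<forall>v\<in>closure R. inner v (x - q) = 0"
    using orthogonal_projection_exists[OF subspace_closure] by blast
  define y where "y = x - q"
  have Vy: "V y = y"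
    using q_orth closure_subset[of R] by (intro fixed_if_orthogonal_to_coboundaries) (auto simp: R_def y_def)
  have "(V ^^ t) y = y" for t by (induction t) (simp_all add: Vy)
  hence "cesaro_mean V T y = y" if "T > 0" for T
    using that by (simp add: cesaro_mean_def sum_constant_scaleR)
  hence "cesaro_mean V T x = cesaro_mean V T q + y" if "T > 0" for T
    using that cesaro_mean_add[of T q y] by (simp add: y_def)
  hence "\<forall>\<^sub>F T in sequentially. cesaro_mean V T q + y = cesaro_mean V T x"
    by (auto simp: eventually_sequentially intro: exI[of _ 1])
  moreover have "(\<lambda>T. cesaro_mean V T q + y) \<longlonglongrightarrow> y"
    using tendsto_add[OF cesaro_mean_closure_coboundaries tendsto_const] qR by (simp add: R_def)
  ultimately have "(\<lambda>T. cesaro_mean V T x) \<longlonglongrightarrow> y" by (rule Lim_transform_eventually[rotated])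
  thus ?thesis using Vy qR by (auto simp: y_def R_def)
qed

end

section \<open>Complex structure of l2(I)\<close>

lift_definition cscale :: "complex \<Rightarrow> 'a ell2 \<Rightarrow> 'a ell2" is "\<lambda>c f a. c * f a"
  by (rule square_summable_scale)

lift_definition cinner :: "'a ell2 \<Rightarrow> 'a ell2 \<Rightarrow> complex" is fun_inner .

lemmas coords_cscale [simp] = cscale.rep_eq

lemma coords_sum: "coords (\<Sum>t\<in>A. X t) a = (\<Sum>t\<in>A. coords (X t) a)"
  by (induction A rule: infinite_finite_induct) auto

lemma inner_cinner: "inner x y = Re (cinner x y)"
  by transfer simp

lemma cinner_self: "cinner x x = complex_of_real ((norm x)^2)"
  by transfer (simp add: fun_inner_self sqnorm_nonneg)

lemma cinner_add_right: "cinner x (y + z) = cinner x y + cinner x z"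
  by transfer (simp add: fun_inner_add_right)

lemma cinner_diff_right: "cinner x (y - z) = cinner x y - cinner x z"
  using cinner_add_right[of x "y - z" z] by simp

lemma cinner_zero_right [simp]: "cinner x 0 = 0"
  by transfer (simp add: fun_inner_def)

lemma cinner_cscale_right: "cinner x (cscale c y) = c * cinner x y"
  by transfer (simp add: fun_inner_scale_right)

lemma cinner_cscale_left: "cinner (cscale c x) y = cnj c * cinner x y"
  by transfer (simp add: fun_inner_scale_left)

lemma cinner_via_inner:
  "cinner x y = complex_of_real (inner x y) + \<i> * complex_of_real (inner (cscale \<i> x) y)"
  by (simp add: inner_cinner cinner_cscale_left complex_eq_iff)

lemma scaleR_cscale: "a *\<^sub>R x = cscale (complex_of_real a) x"
  by transfer simp

lemma cscale_add: "cscale c (x + y) = cscale c x + cscale c y"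
  by transfer (simp add: algebra_simps)

lemma cscale_diff: "cscale c (x - y) = cscale c x - cscale c y"
  by transfer (simp add: algebra_simps)

lemma cscale_add_left: "cscale (a + b) x = cscale a x + cscale b x"
  by transfer (simp add: algebra_simps)

lemma cscale_cscale: "cscale a (cscale b x) = cscale (a * b) x"
  by transfer (simp add: algebra_simps)

lemma cscale_one [simp]: "cscale 1 x = x"
  by transfer simp

lemma cscale_zero [simp]: "cscale 0 x = 0" "cscale a 0 = 0"
  by (transfer, simp)+

lemma cscale_sum: "cscale a (\<Sum>j\<in>F. f j) = (\<Sum>j\<in>F. cscale a (f j))"
  by (induction F rule: infinite_finite_induct) (simp_all add: cscale_add)

lemma norm_cscale: "norm (cscale c x) = cmod c * norm x"
proof -
  have "sqnorm (coords (cscale c x)) = (cmod c)^2 * sqnorm (coords x)"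
    unfolding sqnorm_def by (simp add: norm_mult power_mult_distrib infsum_cmult_right')
  hence "(norm (cscale c x))^2 = (cmod c)^2 * (norm x)^2" by (simp only: sqnorm_coords)
  hence "(norm (cscale c x))^2 = (cmod c * norm x)^2" by (simp add: power_mult_distrib)
  thus ?thesis by (simp add: power2_eq_iff_nonneg)
qed

lemma bounded_linear_cscale: "bounded_linear (cscale c)"
  by (rule bounded_linear_intro[where K = "cmod c"])
    (simp_all add: cscale_add scaleR_cscale cscale_cscale mult.commute norm_cscale)

locale ell2_contraction =
  fixes U :: "'a ell2 \<Rightarrow> 'a ell2"
  assumes U_add: "U (x + y) = U x + U y"
    and U_cscale: "U (cscale c x) = cscale c (U x)"
    and U_contractive: "norm (U x) \<le> norm x"
begin

sublocale linear_contraction U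
  by standard (auto intro: linearI simp: U_add scaleR_cscale U_cscale U_contractive)

end

section \<open>Convergence of time-averaged local probabilities\<close>

text \<open>The local probability \<open>|(U^t \<psi>)(a)|\<^sup>2\<close> is quadratic in \<open>\<psi>\<close>.  It is the diagonal
  entry of the rank-one vector \<open>U^t \<psi> \<otimes> conj (U^t \<psi>)\<close> of l2(I \<times> I), which is obtained from
  \<open>\<psi> \<otimes> conj \<psi>\<close> by the t-th power of the contraction \<open>U \<otimes> conj U\<close>; the mean ergodic
  theorem for the latter gives convergence of the time averages.\<close>

lemma square_summable_slice:
  assumes "square_summable f" shows "square_summable (\<lambda>c. f (c, d))"
proof (rule square_summable_bounded)
  fix C :: "'a set" assume "finite C"
  have "(\<Sum>c\<in>C. (cmod (f (c, d)))^2) = (\<Sum>p\<in>(\<lambda>c. (c, d)) ` C. (cmod (f p))^2)"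
    by (subst sum.reindex) (auto simp: inj_on_def)
  also have "\<dots> \<le> sqnorm f" using \<open>finite C\<close> assms by (intro finite_sum_le_sqnorm) auto
  finally show "(\<Sum>c\<in>C. (cmod (f (c, d)))^2) \<le> sqnorm f" .
qed

lemma infsum_finite_sum:
  fixes h :: "'c \<Rightarrow> 'd \<Rightarrow> real"
  assumes "finite D" "\<And>d. d \<in> D \<Longrightarrow> (\<lambda>c. h c d) summable_on UNIV"
  shows "(\<lambda>c. \<Sum>d\<in>D. h c d) summable_on UNIV"
    and "infsum (\<lambda>c. \<Sum>d\<in>D. h c d) UNIV = (\<Sum>d\<in>D. infsum (\<lambda>c. h c d) UNIV)"
  using assms by (induction D rule: finite_induct) (simp_all add: summable_on_add infsum_add)

lemma sum_sqnorm_slices_le: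
  assumes "square_summable f" "finite D"
  shows "(\<Sum>d\<in>D. sqnorm (\<lambda>c. f (c, d))) \<le> sqnorm f"
proof -
  let ?h = "\<lambda>c d. (cmod (f (c, d)))^2"
  have slices: "(\<lambda>c. ?h c d) summable_on UNIV" for d
    using square_summable_slice[OF assms(1)] by (simp add: square_summable_def)
  note finsum = infsum_finite_sum[of D ?h, OF assms(2) slices]
  have "(\<Sum>d\<in>D. sqnorm (\<lambda>c. f (c, d))) = infsum (\<lambda>c. \<Sum>d\<in>D. ?h c d) UNIV"
    using finsum(2) by (simp add: sqnorm_def)
  also have "\<dots> \<le> sqnorm f"
  proof (rule infsum_le_finite_sums[OF finsum(1)])
    fix C :: "'a set" assume "finite C"
    have "(\<Sum>c\<in>C. \<Sum>d\<in>D. ?h c d) = (\<Sum>p\<in>C \<times> D. (cmod (f p))^2)"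
      by (simp add: sum.cartesian_product)
    also have "\<dots> \<le> sqnorm f" using \<open>finite C\<close> assms by (intro finite_sum_le_sqnorm) auto
    finally show "(\<Sum>c\<in>C. \<Sum>d\<in>D. ?h c d) \<le> sqnorm f" .
  qed
  finally show ?thesis .
qed

lift_definition slice :: "('a \<times> 'b) ell2 \<Rightarrow> 'b \<Rightarrow> 'a ell2" is "\<lambda>X d c. X (c, d)"
  by (rule square_summable_slice)

lemmas coords_slice [simp] = slice.rep_eq

lemma slice_add: "slice (X + Y) d = slice X d + slice Y d"
  by transfer simp

lemma slice_scaleR: "slice (r *\<^sub>R X) d = r *\<^sub>R slice X d"
  by transfer simp

text \<open>\<open>apply_left T X\<close> applies \<open>T\<close> to every column of \<open>X\<close>, i.e. it is \<open>T \<otimes> id\<close>; for a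
  contraction \<open>T\<close> the result is again square-summable, of no larger norm.\<close>
definition apply_left :: "('a ell2 \<Rightarrow> 'a ell2) \<Rightarrow> ('a \<times> 'b) ell2 \<Rightarrow> ('a \<times> 'b) ell2" where
  "apply_left T X = ell2_of (\<lambda>(a, d). coords (T (slice X d)) a)"

lemma apply_left_bound:
  fixes T :: "'a ell2 \<Rightarrow> 'a ell2" and X :: "('a \<times> 'b) ell2"
  assumes contr: "\<And>x. norm (T x) \<le> norm x"
  shows "square_summable (\<lambda>(a, d). coords (T (slice X d)) a)"
    and "sqnorm (\<lambda>(a, d). coords (T (slice X d)) a) \<le> sqnorm (coords X)"
proof -
  let ?g = "\<lambda>(a, d). coords (T (slice X d)) a"
  have "(\<Sum>p\<in>F. (cmod (?g p))^2) \<le> sqnorm (coords X)" if "finite F" for F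
  proof -
    have fin: "finite (fst ` F)" "finite (snd ` F)" using \<open>finite F\<close> by auto
    have "(\<Sum>p\<in>F. (cmod (?g p))^2) \<le> (\<Sum>p\<in>fst ` F \<times> snd ` F. (cmod (?g p))^2)"
      using fin by (intro sum_mono2) (auto intro: rev_image_eqI)
    also have "\<dots> = (\<Sum>a\<in>fst ` F. \<Sum>d\<in>snd ` F. (cmod (coords (T (slice X d)) a))^2)"
      unfolding sum.cartesian_product by (rule sum.cong) auto
    also have "\<dots> = (\<Sum>d\<in>snd ` F. \<Sum>a\<in>fst ` F. (cmod (coords (T (slice X d)) a))^2)"
      by (rule sum.swap)
    also have "\<dots> \<le> (\<Sum>d\<in>snd ` F. (norm (T (slice X d)))^2)"
      using fin finite_sum_le_sqnorm[OF square_summable_coords]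
      by (intro sum_mono) (simp add: sqnorm_coords[symmetric])
    also have "\<dots> \<le> (\<Sum>d\<in>snd ` F. sqnorm (\<lambda>c. coords X (c, d)))"
      using contr sqnorm_coords[of "slice X _"] by (intro sum_mono) (simp add: power_mono)
    also have "\<dots> \<le> sqnorm (coords X)" using fin by (intro sum_sqnorm_slices_le) auto
    finally show ?thesis .
  qed
  from square_summable_bounded[OF this]
  show "square_summable ?g" "sqnorm ?g \<le> sqnorm (coords X)" by auto
qed

lemma coords_apply_left:
  assumes "\<And>x. norm (T x) \<le> norm x"
  shows "coords (apply_left T X) (a, d) = coords (T (slice X d)) a"
  using apply_left_bound(1)[OF assms, of X] by (simp add: apply_left_def coords_ell2_of)

lemma norm_apply_left:
  assumes "\<And>x. norm (T x) \<le> norm x"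
  shows "norm (apply_left T X) \<le> norm X"
proof -
  have "coords (apply_left T X) = (\<lambda>(a, d). coords (T (slice X d)) a)"
    using apply_left_bound(1)[OF assms, of X] by (simp add: apply_left_def coords_ell2_of)
  hence "sqnorm (coords (apply_left T X)) \<le> sqnorm (coords X)"
    using apply_left_bound(2)[OF assms, of X] by simp
  thus ?thesis unfolding sqnorm_coords by (simp add: power_mono_iff)
qed

lemma linear_apply_left:
  assumes "\<And>x. norm (T x) \<le> norm x" "linear T"
  shows "linear (apply_left T)"
  by (rule linearI) (auto intro!: ell2_eqI simp: coords_apply_left[OF assms(1)] slice_add
      slice_scaleR linear_add[OF assms(2)] linear_scale[OF assms(2)])

lemma square_summable_outer:
  assumes "square_summable f" "square_summable g"
  shows "square_summable (\<lambda>(a, b). f a * cnj (g b))"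
proof (rule square_summable_bounded)
  fix F :: "('a \<times> 'b) set" assume "finite F"
  let ?h = "\<lambda>p. (cmod (case p of (a, b) \<Rightarrow> f a * cnj (g b)))^2"
  have fin: "finite (fst ` F)" "finite (snd ` F)" using \<open>finite F\<close> by auto
  have "(\<Sum>p\<in>F. ?h p) \<le> (\<Sum>p\<in>fst ` F \<times> snd ` F. ?h p)"
    using fin by (intro sum_mono2) (auto intro: rev_image_eqI)
  also have "\<dots> = (\<Sum>a\<in>fst ` F. \<Sum>b\<in>snd ` F. (cmod (f a))^2 * (cmod (g b))^2)"
    unfolding sum.cartesian_product by (rule sum.cong) (auto simp: norm_mult power_mult_distrib)
  also have "\<dots> = (\<Sum>a\<in>fst ` F. (cmod (f a))^2) * (\<Sum>b\<in>snd ` F. (cmod (g b))^2)"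
    by (simp add: sum_product)
  also have "\<dots> \<le> sqnorm f * sqnorm g"
    using fin assms by (intro mult_mono finite_sum_le_sqnorm sqnorm_nonneg sum_nonneg) auto
  finally show "(\<Sum>p\<in>F. ?h p) \<le> sqnorm f * sqnorm g" .
qed

lift_definition outer :: "'a ell2 \<Rightarrow> 'b ell2 \<Rightarrow> ('a \<times> 'b) ell2" is "\<lambda>f g (a, b). f a * cnj (g b)"
  by (rule square_summable_outer)

lemma coords_outer [simp]: "coords (outer x y) (a, b) = coords x a * cnj (coords y b)"
  by transfer simp

lemma apply_left_outer:
  assumes "\<And>x. norm (T x) \<le> norm x" "\<And>c x. T (cscale c x) = cscale c (T x)"
  shows "apply_left T (outer x y) = outer (T x) y"
proof -
  have "slice (outer x y) d = cscale (cnj (coords y d)) x" for d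
    by (rule ell2_eqI) (simp add: mult.commute)
  thus ?thesis by (intro ell2_eqI) (auto simp: coords_apply_left[OF assms(1)] assms(2) mult.commute)
qed

lemma square_summable_conj_swap:
  assumes "square_summable f" shows "square_summable (\<lambda>(a, b). cnj (f (b, a)))"
  using summable_on_reindex_bij_betw[OF bij_swap, of "\<lambda>p. (cmod (f p))^2"] assms
  by (simp add: square_summable_def case_prod_unfold prod.swap_def)

lift_definition conj_swap :: "('a \<times> 'a) ell2 \<Rightarrow> ('a \<times> 'a) ell2" is "\<lambda>X (a, b). cnj (X (b, a))"
  by (rule square_summable_conj_swap)

lemma coords_conj_swap [simp]: "coords (conj_swap X) (a, b) = cnj (coords X (b, a))"
  by transfer simp

lemma norm_conj_swap: "norm (conj_swap X) = norm X"
proof -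
  have "infsum (\<lambda>p. (cmod (coords X (prod.swap p)))^2) UNIV = infsum (\<lambda>p. (cmod (coords X p))^2) UNIV"
    by (rule infsum_reindex_bij_betw[OF bij_swap])
  hence "sqnorm (coords (conj_swap X)) = sqnorm (coords X)"
    unfolding sqnorm_def conj_swap.rep_eq by (simp add: case_prod_unfold prod.swap_def)
  thus ?thesis by (simp add: norm_ell2_sqnorm)
qed

lemma linear_conj_swap: "linear conj_swap"
  by (rule linearI) (auto intro!: ell2_eqI)

lemma conj_swap_outer: "conj_swap (outer x y) = outer y x"
  by (rule ell2_eqI) (auto simp: mult.commute)

text \<open>The mass of \<open>x\<close> on a finite set \<open>F\<close> of coordinates; for the walk and \<open>F\<close> the arcs
  out of a vertex this is the probability of finding the walker there.\<close>
definition local_mass :: "'a ell2 \<Rightarrow> 'a set \<Rightarrow> real" where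
  "local_mass x F = (\<Sum>a\<in>F. (cmod (coords x a))^2)"

lemma norm_add_sq_ge: "(cmod (u + v))^2 \<ge> (cmod u)^2 + 2 * Re (cnj u * v)"
proof -
  have "(cmod (u + v))^2 = Re ((u + v) * cnj (u + v))"
    by (simp only: complex_norm_square[symmetric] Re_complex_of_real)
  also have "\<dots> = Re (u * cnj u) + 2 * Re (cnj u * v) + Re (v * cnj v)"
    by (simp add: algebra_simps)
  also have "\<dots> = (cmod u)^2 + 2 * Re (cnj u * v) + (cmod v)^2"
    by (simp add: complex_norm_square[symmetric])
  finally show ?thesis by simp
qed

lemma local_mass_add_ge:
  "local_mass (x + y) F \<ge> local_mass x F + 2 * Re (\<Sum>a\<in>F. cnj (coords x a) * coords y a)"
  unfolding local_mass_def using norm_add_sq_ge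
  by (simp add: Re_sum sum_distrib_left sum.distrib[symmetric] sum_mono)

context ell2_contraction
begin

text \<open>The operator \<open>U \<otimes> conj U\<close> on l2(I \<times> I).\<close>
definition tensor_square :: "('a \<times> 'a) ell2 \<Rightarrow> ('a \<times> 'a) ell2" where
  "tensor_square X = conj_swap (apply_left U (conj_swap (apply_left U X)))"

lemma tensor_square_contraction: "linear_contraction tensor_square"
proof (rule linear_contraction.intro)
  note L = linear_apply_left[OF U_contractive linear]
  show "linear tensor_square"
    by (rule linearI) (simp_all add: tensor_square_def linear_add[OF L] linear_scale[OF L]
        linear_add[OF linear_conj_swap] linear_scale[OF linear_conj_swap])
  show "norm (tensor_square X) \<le> norm X" for X
    using norm_apply_left[OF U_contractive, of X] norm_apply_left[OF U_contractive, of "conj_swap (apply_left U X)"]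
    by (simp add: tensor_square_def norm_conj_swap)
qed

lemma tensor_square_power_outer: "(tensor_square ^^ t) (outer \<psi> \<psi>) = outer ((U ^^ t) \<psi>) ((U ^^ t) \<psi>)"
  by (induction t)
    (simp_all add: tensor_square_def apply_left_outer[OF U_contractive U_cscale] conj_swap_outer)

theorem local_mass_average_converges:
  "\<exists>L. (\<lambda>T. (\<Sum>t<T. local_mass ((U ^^ t) \<psi>) F) / real T) \<longlonglongrightarrow> L"
proof -
  interpret W: linear_contraction tensor_square by (rule tensor_square_contraction)
  obtain Y where Y: "(\<lambda>T. cesaro_mean tensor_square T (outer \<psi> \<psi>)) \<longlonglongrightarrow> Y"
    using W.mean_ergodic by blast
  define diag where "diag X = Re (\<Sum>a\<in>F. coords X (a, a))" for X :: "('a \<times> 'a) ell2"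
  have "(\<lambda>T. diag (cesaro_mean tensor_square T (outer \<psi> \<psi>))) \<longlonglongrightarrow> diag Y"
    unfolding diag_def by (intro tendsto_intros coords_tendsto Y)
  moreover have "diag (cesaro_mean tensor_square T (outer \<psi> \<psi>))
      = (\<Sum>t<T. local_mass ((U ^^ t) \<psi>) F) / real T" for T
    by (simp add: diag_def cesaro_mean_def coords_sum Re_sum tensor_square_power_outer
        local_mass_def complex_norm_square[symmetric] sum_divide_distrib sum.swap[of _ F])
  ultimately show ?thesis by auto
qed

text \<open>If every iterate splits as \<open>U^t \<psi> = u + U^t z\<close> where the Cesaro means of \<open>U^t z\<close> tend to 0,
  then the averaged local mass is asymptotically at least that of \<open>u\<close>: expanding the square,
  the cross term is linear in \<open>U^t z\<close>, so its average is that of the Cesaro means.\<close>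
lemma local_mass_average_ge_fixed_part:
  assumes split: "\<And>t. (U ^^ t) \<psi> = u + (U ^^ t) z"
    and vanish: "(\<lambda>T. cesaro_mean U T z) \<longlonglongrightarrow> 0"
    and lim: "(\<lambda>T. (\<Sum>t<T. local_mass ((U ^^ t) \<psi>) F) / real T) \<longlonglongrightarrow> L"
  shows "local_mass u F \<le> L"
proof -
  define w where "w a = cnj (coords u a)" for a
  define R where "R T = local_mass u F + 2 * Re (\<Sum>a\<in>F. w a * coords (cesaro_mean U T z) a)" for T
  have "R \<longlonglongrightarrow> local_mass u F + 2 * Re (\<Sum>a\<in>F. w a * coords 0 a)"
    unfolding R_def by (intro tendsto_intros coords_tendsto vanish)
  hence R_lim: "R \<longlonglongrightarrow> local_mass u F" by simp
  have R_le: "R T \<le> (\<Sum>t<T. local_mass ((U ^^ t) \<psi>) F) / real T" if "T \<ge> 1" for T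
  proof -
    define S where "S = (\<Sum>t<T. \<Sum>a\<in>F. w a * coords ((U ^^ t) z) a)"
    have "(\<Sum>a\<in>F. w a * coords (cesaro_mean U T z) a) = S / of_nat T"
      by (simp add: S_def cesaro_mean_def coords_sum sum_divide_distrib sum_distrib_left
          sum.swap[of _ F])
    hence "R T = local_mass u F + 2 * (Re S / real T)" by (simp add: R_def Re_divide_of_nat)
    hence "real T * R T = real T * local_mass u F + 2 * Re S" using that by (simp add: field_simps)
    also have "\<dots> = (\<Sum>t<T. local_mass u F + 2 * Re (\<Sum>a\<in>F. w a * coords ((U ^^ t) z) a))"
      by (simp add: S_def sum.distrib Re_sum sum_distrib_left)
    also have "\<dots> \<le> (\<Sum>t<T. local_mass ((U ^^ t) \<psi>) F)"
      unfolding split w_def by (intro sum_mono local_mass_add_ge)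
    finally show ?thesis using that by (simp add: field_simps)
  qed
  show ?thesis by (rule LIMSEQ_le[OF R_lim lim]) (auto intro: exI[of _ 1] R_le)
qed

end

section \<open>A lower bound from an invariant vector\<close>

locale ell2_contraction_invariant = ell2_contraction U for U :: "'a ell2 \<Rightarrow> 'a ell2" +
  fixes Phi :: "'a ell2"
  assumes Phi_fixed: "U Phi = Phi"
    and Phi_coinvariant: "\<And>w. cinner Phi (U w) = cinner Phi w"
    and fixed_points: "\<And>y. U y = y \<Longrightarrow> \<exists>k. y = cscale k Phi"
    and Phi_nonzero: "Phi \<noteq> 0"
begin

text \<open>On the orthogonal complement of \<open>Phi\<close> the Cesaro means tend to 0: their limit is a
  fixed vector, and it is still orthogonal to \<open>Phi\<close> because all coboundaries are.\<close>
lemma cesaro_mean_orthogonal_vanishes: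
  assumes z: "cinner Phi z = 0"
  shows "(\<lambda>T. cesaro_mean U T z) \<longlonglongrightarrow> 0"
proof -
  obtain y where Uy: "U y = y" and zy: "z - y \<in> closure (range (\<lambda>w. w - U w))"
    and lim: "(\<lambda>T. cesaro_mean U T z) \<longlonglongrightarrow> y"
    using mean_ergodic by blast
  define H where "H = {v. inner Phi v = 0} \<inter> {v. inner (cscale \<i> Phi) v = 0}"
  have H_iff: "v \<in> H \<longleftrightarrow> cinner Phi v = 0" for v
    unfolding H_def by (simp add: inner_cinner cinner_cscale_left complex_eq_iff)
  have "range (\<lambda>w. w - U w) \<subseteq> H"
    using Phi_coinvariant by (auto simp: H_iff cinner_diff_right)
  moreover have "closed H" unfolding H_def by (intro closed_Int closed_hyperplane)
  ultimately have "closure (range (\<lambda>w. w - U w)) \<subseteq> H" by (rule closure_minimal)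
  hence "cinner Phi y = 0" using zy z H_iff by (force simp: cinner_diff_right)
  moreover obtain k where yk: "y = cscale k Phi" using fixed_points[OF Uy] by blast
  ultimately have "k * complex_of_real ((norm Phi)^2) = 0" by (simp add: cinner_cscale_right cinner_self)
  hence "y = 0" using yk Phi_nonzero by simp
  thus ?thesis using lim by simp
qed

text \<open>Writing \<open>\<psi> = c Phi + z\<close> with \<open>z \<perp> Phi\<close>, the local mass of \<open>U^t \<psi> = c Phi + U^t z\<close> is at
  least that of \<open>c Phi\<close> plus a cross term which is linear in \<open>U^t z\<close> and so averages to 0.\<close>
theorem local_mass_average_lower_bound:
  assumes lim: "(\<lambda>T. (\<Sum>t<T. local_mass ((U ^^ t) \<psi>) F) / real T) \<longlonglongrightarrow> L"
  shows "L \<ge> (cmod (cinner Phi \<psi>))^2 / (norm Phi)^4 * local_mass Phi F"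
proof -
  define n2 where "n2 = (norm Phi)^2"
  have n2: "n2 > 0" using Phi_nonzero by (simp add: n2_def)
  define c where "c = cinner Phi \<psi> / complex_of_real n2"
  define z where "z = \<psi> - cscale c Phi"
  have z_orth: "cinner Phi z = 0"
    using n2 by (simp add: z_def c_def cinner_diff_right cinner_cscale_right cinner_self n2_def)
  have split: "(U ^^ t) \<psi> = cscale c Phi + (U ^^ t) z" for t
  proof -
    have "(U ^^ t) (cscale c Phi + z) = (U ^^ t) (cscale c Phi) + (U ^^ t) z"
      by (rule linear_add[OF power_linear])
    moreover have "(U ^^ t) (cscale c Phi) = cscale c Phi"
      by (induction t) (simp_all add: U_cscale Phi_fixed)
    ultimately show ?thesis by (simp add: z_def)
  qed
  have "local_mass (cscale c Phi) F \<le> L"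
    using local_mass_average_ge_fixed_part[OF split cesaro_mean_orthogonal_vanishes[OF z_orth] lim] .
  moreover have "cmod c = cmod (cinner Phi \<psi>) / n2" using n2 by (simp add: c_def norm_divide)
  hence "local_mass (cscale c Phi) F = (cmod (cinner Phi \<psi>))^2 / (norm Phi)^4 * local_mass Phi F"
    by (simp add: local_mass_def norm_mult power_mult_distrib sum_distrib_left n2_def power_divide
        power_mult[symmetric])
  ultimately show ?thesis by simp
qed

end

section \<open>The quantum walk of the birth-death chain\<close>

text \<open>\<open>rev_arc\<close> is the arc reversal on which the shift acts: it swaps \<open>|j;R\<rangle>\<close> and
  \<open>|j+1;L\<rangle>\<close> and fixes the self loops (and the arc \<open>Larc 0\<close>, which is not in A).\<close>
fun rev_arc :: "arc \<Rightarrow> arc" where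
  "rev_arc (Rarc j) = Larc (Suc j)"
| "rev_arc (Larc (Suc j)) = Rarc j"
| "rev_arc (Larc 0) = Larc 0"
| "rev_arc (Oarc j) = Oarc j"

lemma rev_arc_rev_arc [simp]: "rev_arc (rev_arc a) = a"
  by (cases a rule: rev_arc.cases) auto

lemma bij_rev_arc: "bij_betw rev_arc UNIV UNIV"
  by (rule bij_betwI[of _ _ _ rev_arc]) auto

lemma shift_rev_arc: "shift f a = (if a = Larc 0 then 0 else f (rev_arc a))"
  by (cases a rule: rev_arc.cases) auto

lemma square_summable_shift:
  assumes "square_summable f" shows "square_summable (shift f)"
  unfolding square_summable_def
proof (rule summable_on_comparison_test)
  show "(\<lambda>a. (cmod (f (rev_arc a)))^2) summable_on UNIV"
    using summable_on_reindex_bij_betw[OF bij_rev_arc, of "\<lambda>a. (cmod (f a))^2"] assms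
    by (simp add: square_summable_def)
qed (auto simp: shift_rev_arc)

locale birth_death =
  fixes p q r :: "nat \<Rightarrow> real"
  assumes nonneg: "\<And>j. p j \<ge> 0 \<and> q j \<ge> 0 \<and> r j \<ge> 0"
    and sum1: "\<And>j. p j + q j + r j = 1"
    and q0: "q 0 = 0"
    and ppos: "\<And>j. p j > 0"
    and qpos: "\<And>j. j \<ge> 1 \<Longrightarrow> q j > 0"
    and pos_rec: "summable (\<lambda>n. wgt p q (Suc n))"
begin

definition out_arcs :: "nat \<Rightarrow> arc set" where
  "out_arcs j = {b. origin b = j \<and> inA r b}"

lemma out_arcs_cases:
  "out_arcs j = {Rarc j} \<union> (if 1 \<le> j then {Larc j} else {}) \<union> (if 0 < r j then {Oarc j} else {})"
  by (rule set_eqI, case_tac x) (auto simp: out_arcs_def)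

lemma finite_out_arcs [simp]: "finite (out_arcs j)"
  by (simp add: out_arcs_cases)

lemma sum_out_arcs: "(\<Sum>b\<in>out_arcs j. f b)
    = f (Rarc j) + (if 1 \<le> j then f (Larc j) else 0) + (if 0 < r j then f (Oarc j) else 0)"
  by (cases "1 \<le> j"; cases "0 < r j") (simp_all add: out_arcs_cases algebra_simps)

lemma in_out_arcs: "b \<in> out_arcs j \<longleftrightarrow> origin b = j \<and> inA r b"
  by (simp add: out_arcs_def)

abbreviation cf :: "arc \<Rightarrow> real" where "cf \<equiv> coef p q r"

lemma cf_nonneg: "cf b \<ge> 0"
  using nonneg by (cases b) auto

lemma cf_sq: "(cf b)^2 = (case b of Rarc j \<Rightarrow> p j | Larc j \<Rightarrow> q j | Oarc j \<Rightarrow> r j)"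
  using nonneg by (cases b) auto

lemma cf_sq_sum: "(\<Sum>b\<in>out_arcs j. (cf b)^2) = 1"
proof -
  have "(\<Sum>b\<in>out_arcs j. (cf b)^2) = p j + (if 1 \<le> j then q j else 0) + (if 0 < r j then r j else 0)"
    by (simp add: sum_out_arcs cf_sq)
  also have "\<dots> = p j + q j + r j"
    using q0 nonneg[of j] by (cases "j = 0") (auto simp: less_eq_real_def)
  finally show ?thesis using sum1 by simp
qed

lemma avec_eq: "avec p q r j b = (if b \<in> out_arcs j then complex_of_real (cf b) else 0)"
  by (simp add: avec_def out_arcs_def)

lemma in_l2_iff: "in_l2 r f \<longleftrightarrow> (\<forall>a. \<not> inA r a \<longrightarrow> f a = 0) \<and> square_summable f"
  by (simp add: in_l2_def square_summable_def)

lemma square_summable_avec: "square_summable (avec p q r j)"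
  by (rule square_summable_finite_support[of "out_arcs j"]) (auto simp: avec_eq)

definition a_vec :: "nat \<Rightarrow> arc ell2" where "a_vec j = ell2_of (avec p q r j)"

lemma coords_a_vec: "coords (a_vec j) = avec p q r j"
  using square_summable_avec by (simp add: a_vec_def coords_ell2_of)

definition supported :: "arc ell2 \<Rightarrow> bool" where
  "supported x \<longleftrightarrow> (\<forall>a. \<not> inA r a \<longrightarrow> coords x a = 0)"

definition amp :: "nat \<Rightarrow> arc ell2 \<Rightarrow> complex" where
  "amp j x = (\<Sum>b\<in>out_arcs j. complex_of_real (cf b) * coords x b)"

lemma cinner_a_vec: "cinner (a_vec j) x = amp j x"
proof -
  have "cinner (a_vec j) x = (\<Sum>b\<in>out_arcs j. cnj (avec p q r j b) * coords x b)"
    unfolding cinner.rep_eq fun_inner_def coords_a_vec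
    by (rule infsum_finite_support) (auto simp: avec_eq)
  also have "\<dots> = amp j x" unfolding amp_def by (rule sum.cong) (auto simp: avec_eq)
  finally show ?thesis .
qed

lemma amp_add: "amp j (x + y) = amp j x + amp j y"
  by (simp add: amp_def algebra_simps sum.distrib)

lemma amp_cscale: "amp j (cscale c x) = c * amp j x"
  by (simp add: amp_def sum_distrib_left algebra_simps)

lemma amp_a_vec: "amp i (a_vec j) = (if i = j then 1 else 0)"
proof -
  have "amp i (a_vec j) = (\<Sum>b\<in>out_arcs i. complex_of_real (cf b) * avec p q r j b)"
    by (simp add: amp_def coords_a_vec)
  also have "\<dots> = (if i = j then (\<Sum>b\<in>out_arcs i. complex_of_real ((cf b)^2)) else 0)"
    by (auto simp: avec_eq in_out_arcs power2_eq_square intro!: sum.neutral)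
  also have "\<dots> = (if i = j then 1 else 0)"
    by (simp only: of_real_sum[symmetric] cf_sq_sum) simp
  finally show ?thesis .
qed

text \<open>These are exactly the elements of the closed span of the \<open>a_j\<close>
  (lemmas \<open>closed_span_local_form\<close> and \<open>local_form_closed_span\<close> below).\<close>
definition local_form :: "arc ell2 \<Rightarrow> bool" where
  "local_form x \<longleftrightarrow> (\<forall>b. coords x b = (if inA r b then complex_of_real (cf b) * amp (origin b) x else 0))"

lemma local_form_add: "local_form x \<Longrightarrow> local_form y \<Longrightarrow> local_form (x + y)"
  unfolding local_form_def by (simp add: amp_add algebra_simps)

lemma local_form_cscale: "local_form x \<Longrightarrow> local_form (cscale c x)"
  unfolding local_form_def by (simp add: amp_cscale algebra_simps)

lemma local_form_zero: "local_form 0"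
  unfolding local_form_def amp_def by simp

lemma local_form_a_vec: "local_form (a_vec j)"
  unfolding local_form_def by (auto simp: coords_a_vec avec_eq amp_a_vec in_out_arcs)

lemma local_form_supported: "local_form x \<Longrightarrow> supported x"
  unfolding local_form_def supported_def by simp

lemma closed_local_form: "closed {x. local_form x}"
  unfolding closed_sequential_limits
proof (intro allI impI, elim conjE)
  fix X x assume X: "\<forall>n. X n \<in> {x. local_form x}" and lim: "X \<longlonglongrightarrow> x"
  have amp_lim: "(\<lambda>n. amp j (X n)) \<longlonglongrightarrow> amp j x" for j
    unfolding amp_def by (intro tendsto_intros coords_tendsto lim)
  show "x \<in> {x. local_form x}" unfolding mem_Collect_eq local_form_def
  proof
    fix b
    have "(\<lambda>n. coords (X n) b) = (\<lambda>n. if inA r b then complex_of_real (cf b) * amp (origin b) (X n) else 0)"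
      using X unfolding local_form_def by auto
    hence "(\<lambda>n. coords (X n) b) \<longlonglongrightarrow> (if inA r b then complex_of_real (cf b) * amp (origin b) x else 0)"
      by (auto intro!: tendsto_intros amp_lim)
    thus "coords x b = (if inA r b then complex_of_real (cf b) * amp (origin b) x else 0)"
      using coords_tendsto[OF lim] LIMSEQ_unique by blast
  qed
qed

definition finite_span :: "arc ell2 set" where
  "finite_span = {x. \<exists>F c. finite F \<and> x = (\<Sum>j\<in>F. cscale (c j) (a_vec j))}"

definition closed_span :: "arc ell2 set" where "closed_span = closure finite_span"

lemma finite_span_add: "x \<in> finite_span \<Longrightarrow> y \<in> finite_span \<Longrightarrow> x + y \<in> finite_span"
proof -
  assume "x \<in> finite_span" "y \<in> finite_span"
  then obtain F c G d where F: "finite F" "x = (\<Sum>j\<in>F. cscale (c j) (a_vec j))"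
    and G: "finite G" "y = (\<Sum>j\<in>G. cscale (d j) (a_vec j))" unfolding finite_span_def by blast
  define c' where "c' j = (if j \<in> F then c j else 0)" for j
  define d' where "d' j = (if j \<in> G then d j else 0)" for j
  have fin: "finite (F \<union> G)" using F G by simp
  have "x = (\<Sum>j\<in>F. cscale (c' j) (a_vec j))" unfolding F(2) by (rule sum.cong) (auto simp: c'_def)
  also have "\<dots> = (\<Sum>j\<in>F \<union> G. cscale (c' j) (a_vec j))"
    by (rule sum.mono_neutral_left[OF fin]) (auto simp: c'_def)
  finally have x: "x = (\<Sum>j\<in>F \<union> G. cscale (c' j) (a_vec j))" .
  have "y = (\<Sum>j\<in>G. cscale (d' j) (a_vec j))" unfolding G(2) by (rule sum.cong) (auto simp: d'_def)
  also have "\<dots> = (\<Sum>j\<in>F \<union> G. cscale (d' j) (a_vec j))"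
    by (rule sum.mono_neutral_left[OF fin]) (auto simp: d'_def)
  finally have "x + y = (\<Sum>j\<in>F \<union> G. cscale (c' j + d' j) (a_vec j))"
    using x by (simp add: cscale_add_left sum.distrib)
  thus ?thesis using fin unfolding finite_span_def
    by (intro CollectI exI[of _ "F \<union> G"] exI[of _ "\<lambda>j. c' j + d' j"]) simp
qed

lemma finite_span_cscale: "x \<in> finite_span \<Longrightarrow> cscale a x \<in> finite_span"
proof -
  assume "x \<in> finite_span"
  then obtain F c where F: "finite F" "x = (\<Sum>j\<in>F. cscale (c j) (a_vec j))"
    unfolding finite_span_def by blast
  have "cscale a x = (\<Sum>j\<in>F. cscale (a * c j) (a_vec j))"
    unfolding F(2) cscale_sum by (simp add: cscale_cscale)
  thus ?thesis using F(1) unfolding finite_span_def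
    by (intro CollectI exI[of _ F] exI[of _ "\<lambda>j. a * c j"]) simp
qed

lemma a_vec_closed_span: "a_vec j \<in> closed_span"
proof -
  have "a_vec j \<in> finite_span"
    unfolding finite_span_def by (auto intro!: exI[of _ "{j}"] exI[of _ "\<lambda>_. 1"])
  thus ?thesis using closure_subset closed_span_def by blast
qed

lemma subspace_closed_span: "subspace closed_span"
proof -
  have "0 \<in> finite_span" unfolding finite_span_def by (auto intro!: exI[of _ "{}"])
  hence "subspace finite_span"
    unfolding subspace_def using finite_span_add finite_span_cscale by (simp add: scaleR_cscale)
  thus ?thesis unfolding closed_span_def by (rule subspace_closure)
qed

lemma closed_span_cscale: "x \<in> closed_span \<Longrightarrow> cscale a x \<in> closed_span"
  using closure_bounded_linear_image_subset[OF bounded_linear_cscale, of a finite_span]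
    closure_mono[of "cscale a ` finite_span" finite_span] finite_span_cscale
  unfolding closed_span_def by blast

lemma local_form_finite_span: "x \<in> finite_span \<Longrightarrow> local_form x"
proof -
  have "local_form (\<Sum>j\<in>F. cscale (c j) (a_vec j))" if "finite F" for F c
    using that
    by (induction F rule: finite_induct)
      (simp_all add: local_form_zero local_form_add local_form_cscale local_form_a_vec)
  thus "x \<in> finite_span \<Longrightarrow> local_form x" unfolding finite_span_def by blast
qed

lemma closed_span_local_form: "x \<in> closed_span \<Longrightarrow> local_form x"
  using closure_minimal[OF _ closed_local_form] local_form_finite_span
  unfolding closed_span_def by blast

text \<open>Orthogonal projection onto the closed span; the real projection theorem suffices because
  the span is closed under multiplication by \<open>i\<close>.\<close>
lemma complex_projection_exists: "\<exists>y\<in>closed_span. \<forall>v\<in>closed_span. cinner v (x - y) = 0"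
proof -
  have "closed closed_span" unfolding closed_span_def by simp
  then obtain y where y: "y \<in> closed_span" "\<forall>v\<in>closed_span. inner v (x - y) = 0"
    using orthogonal_projection_exists[OF subspace_closed_span] by blast
  have "cinner v (x - y) = 0" if "v \<in> closed_span" for v
    using y(2) that closed_span_cscale[OF that, of \<i>] by (simp add: cinner_via_inner)
  thus ?thesis using y(1) by blast
qed

lemma complex_projection_unique:
  assumes "y1 \<in> closed_span" "\<forall>v\<in>closed_span. cinner v (x - y1) = 0"
    and "y2 \<in> closed_span" "\<forall>v\<in>closed_span. cinner v (x - y2) = 0"
  shows "y1 = y2"
proof -
  have "y1 - y2 \<in> closed_span" using assms subspace_closed_span by (simp add: subspace_diff)
  hence "cinner (y1 - y2) (y1 - y2) = 0"
    using assms(2,4) cinner_diff_right[of "y1 - y2" "x - y2" "x - y1"] by simp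
  thus ?thesis by (simp add: cinner_self)
qed

definition span_proj :: "arc ell2 \<Rightarrow> arc ell2" where
  "span_proj x = (THE y. y \<in> closed_span \<and> (\<forall>v\<in>closed_span. cinner v (x - y) = 0))"

lemma span_proj: "span_proj x \<in> closed_span" "\<forall>v\<in>closed_span. cinner v (x - span_proj x) = 0"
proof -
  have "\<exists>!y. y \<in> closed_span \<and> (\<forall>v\<in>closed_span. cinner v (x - y) = 0)"
    using complex_projection_exists complex_projection_unique by blast
  from theI'[OF this] show "span_proj x \<in> closed_span" "\<forall>v\<in>closed_span. cinner v (x - span_proj x) = 0"
    unfolding span_proj_def by blast+
qed

lemma span_proj_eqI: "y \<in> closed_span \<Longrightarrow> \<forall>v\<in>closed_span. cinner v (x - y) = 0 \<Longrightarrow> span_proj x = y"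
  using complex_projection_unique span_proj by blast

lemma span_proj_add: "span_proj (x + y) = span_proj x + span_proj y"
  using span_proj[of x] span_proj[of y] subspace_closed_span
  by (intro span_proj_eqI) (auto simp: subspace_add cinner_diff_right cinner_add_right)

lemma span_proj_cscale: "span_proj (cscale c x) = cscale c (span_proj x)"
  using span_proj[of x] closed_span_cscale
  by (intro span_proj_eqI) (auto simp: cscale_diff[symmetric] cinner_cscale_right)

lemma span_proj_id: "x \<in> closed_span \<Longrightarrow> span_proj x = x"
  by (rule span_proj_eqI) auto

lemma amp_span_proj: "amp j (span_proj x) = amp j x"
  using span_proj(2)[of x] a_vec_closed_span[of j] by (simp add: cinner_a_vec[symmetric] cinner_diff_right)

text \<open>Conversely every vector in local form lies in the closed span: its distance to the span
  is in local form and orthogonal to every \<open>a_j\<close>, hence 0.\<close>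
lemma local_form_closed_span:
  assumes "local_form x" shows "x \<in> closed_span"
proof -
  have "local_form (x + cscale (-1) (span_proj x))"
    by (intro local_form_add[OF assms] local_form_cscale closed_span_local_form span_proj(1))
  moreover have "x + cscale (-1) (span_proj x) = x - span_proj x" by (rule ell2_eqI) simp
  ultimately have "local_form (x - span_proj x)" by simp
  moreover have "amp j (x - span_proj x) = 0" for j
    using amp_span_proj[of j x] by (simp add: amp_def algebra_simps sum_subtractf)
  ultimately have "x - span_proj x = 0" by (intro ell2_eqI) (simp add: local_form_def)
  thus ?thesis using span_proj(1)[of x] by simp
qed

lemma closed_span_a_iff: "\<phi> \<in> closed_span_a p q r \<longleftrightarrow> square_summable \<phi> \<and> ell2_of \<phi> \<in> closed_span"
proof -
  have dist_eq: "dist (\<Sum>j\<in>F. cscale (c j) (a_vec j)) (ell2_of \<phi>)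
      = l2_norm (\<lambda>a. \<phi> a - (\<Sum>j\<in>F. c j * avec p q r j a))" if "square_summable \<phi>" for F c
    using that by (simp add: dist_norm norm_minus_commute norm_ell2_sqnorm coords_ell2_of coords_sum
        coords_a_vec l2_norm_def sqnorm_def)
  have "\<phi> \<in> closed_span_a p q r \<longleftrightarrow> square_summable \<phi> \<and> ell2_of \<phi> \<in> closure finite_span"
  proof
    assume a: "\<phi> \<in> closed_span_a p q r"
    hence "square_summable \<phi>" by (simp add: closed_span_a_def in_l2_iff)
    moreover have "ell2_of \<phi> \<in> closure finite_span"
      using a \<open>square_summable \<phi>\<close> unfolding closed_span_a_def closure_approachable finite_span_def
      by (fastforce simp: dist_eq)
    ultimately show "square_summable \<phi> \<and> ell2_of \<phi> \<in> closure finite_span" by simp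
  next
    assume a: "square_summable \<phi> \<and> ell2_of \<phi> \<in> closure finite_span"
    hence "supported (ell2_of \<phi>)"
      using closed_span_local_form local_form_supported closed_span_def by blast
    hence "in_l2 r \<phi>" using a by (simp add: supported_def in_l2_iff coords_ell2_of)
    moreover have "\<exists>F c. finite F \<and> l2_norm (\<lambda>a. \<phi> a - (\<Sum>j\<in>F. c j * avec p q r j a)) < e"
      if "e > 0" for e
      using a that unfolding closure_approachable finite_span_def by (fastforce simp: dist_eq)
    ultimately show "\<phi> \<in> closed_span_a p q r" unfolding closed_span_a_def by blast
  qed
  thus ?thesis by (simp add: closed_span_def)
qed

lemma l2_inner_cinner: "square_summable f \<Longrightarrow> l2_inner f (coords x) = cinner (ell2_of f) x"
  by (simp add: l2_inner_def cinner.rep_eq fun_inner_def coords_ell2_of)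

lemma orthogonal_closed_span_a_iff:
  assumes \<psi>: "square_summable \<psi>"
  shows "(\<forall>v\<in>closed_span_a p q r. l2_inner v (\<lambda>a. \<psi> a - coords y a) = 0)
    \<longleftrightarrow> (\<forall>v\<in>closed_span. cinner v (ell2_of \<psi> - y) = 0)"
proof -
  have diff: "(\<lambda>a. \<psi> a - coords y a) = coords (ell2_of \<psi> - y)" using \<psi> by (simp add: coords_ell2_of)
  show ?thesis
  proof
    assume orth: "\<forall>v\<in>closed_span_a p q r. l2_inner v (\<lambda>a. \<psi> a - coords y a) = 0"
    show "\<forall>v\<in>closed_span. cinner v (ell2_of \<psi> - y) = 0"
    proof
      fix v assume "v \<in> closed_span"
      hence "coords v \<in> closed_span_a p q r" by (simp add: closed_span_a_iff)
      hence "l2_inner (coords v) (coords (ell2_of \<psi> - y)) = 0" using orth unfolding diff by blast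
      thus "cinner v (ell2_of \<psi> - y) = 0"
        by (simp only: l2_inner_cinner[OF square_summable_coords] ell2_of_coords)
    qed
  next
    assume orth: "\<forall>v\<in>closed_span. cinner v (ell2_of \<psi> - y) = 0"
    show "\<forall>v\<in>closed_span_a p q r. l2_inner v (\<lambda>a. \<psi> a - coords y a) = 0"
    proof
      fix v assume "v \<in> closed_span_a p q r"
      hence "square_summable v" "ell2_of v \<in> closed_span" by (auto simp: closed_span_a_iff)
      thus "l2_inner v (\<lambda>a. \<psi> a - coords y a) = 0"
        using orth unfolding diff by (simp only: l2_inner_cinner)
    qed
  qed
qed

lemma projA_eq:
  assumes \<psi>: "square_summable \<psi>" shows "projA p q r \<psi> = coords (span_proj (ell2_of \<psi>))"
  unfolding projA_def
proof (rule the_equality)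
  show "coords (span_proj (ell2_of \<psi>)) \<in> closed_span_a p q r \<and>
      (\<forall>v\<in>closed_span_a p q r. l2_inner v (\<lambda>a. \<psi> a - coords (span_proj (ell2_of \<psi>)) a) = 0)"
    using span_proj by (simp add: closed_span_a_iff orthogonal_closed_span_a_iff[OF \<psi>])
next
  fix \<phi> assume \<phi>: "\<phi> \<in> closed_span_a p q r \<and> (\<forall>v\<in>closed_span_a p q r. l2_inner v (\<lambda>a. \<psi> a - \<phi> a) = 0)"
  hence sq: "square_summable \<phi>" "ell2_of \<phi> \<in> closed_span" by (auto simp: closed_span_a_iff)
  have "\<forall>v\<in>closed_span. cinner v (ell2_of \<psi> - ell2_of \<phi>) = 0"
    using \<phi> orthogonal_closed_span_a_iff[OF \<psi>, of "ell2_of \<phi>"] sq(1) by (simp add: coords_ell2_of)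
  hence "span_proj (ell2_of \<psi>) = ell2_of \<phi>" using sq(2) by (intro span_proj_eqI)
  thus "\<phi> = coords (span_proj (ell2_of \<psi>))" using sq(1) by (simp add: coords_ell2_of)
qed

text \<open>On all of l2(arcs) the walk operator first restricts to the arc set A; on vectors
  supported in A it agrees with \<open>Uop\<close>.\<close>
definition restrict_A :: "arc ell2 \<Rightarrow> arc ell2" where
  "restrict_A x = ell2_of (\<lambda>a. if inA r a then coords x a else 0)"

definition shift_op :: "arc ell2 \<Rightarrow> arc ell2" where
  "shift_op x = ell2_of (shift (coords x))"

definition coin_op :: "arc ell2 \<Rightarrow> arc ell2" where
  "coin_op x = 2 *\<^sub>R span_proj x - x"

definition walk_op :: "arc ell2 \<Rightarrow> arc ell2" where
  "walk_op x = shift_op (coin_op (restrict_A x))"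

lemma coords_restrict_A: "coords (restrict_A x) a = (if inA r a then coords x a else 0)"
proof -
  have "square_summable (\<lambda>a. if inA r a then coords x a else 0)"
    unfolding square_summable_def
    by (rule summable_on_comparison_test[of "\<lambda>a. (cmod (coords x a))^2"])
      (use square_summable_coords[of x] in \<open>auto simp: square_summable_def\<close>)
  thus ?thesis by (simp add: restrict_A_def coords_ell2_of)
qed

lemma coords_shift_op: "coords (shift_op x) = shift (coords x)"
  unfolding shift_op_def by (rule coords_ell2_of[OF square_summable_shift[OF square_summable_coords]])

lemma supported_restrict_A: "supported (restrict_A x)"
  by (simp add: supported_def coords_restrict_A)

lemma restrict_A_supported: "supported x \<Longrightarrow> restrict_A x = x"
  by (rule ell2_eqI) (simp add: coords_restrict_A supported_def)

lemma inA_rev_arc: "inA r (rev_arc a) \<longleftrightarrow> inA r a"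
  by (cases a rule: rev_arc.cases) auto

lemma supported_shift_op: "supported x \<Longrightarrow> supported (shift_op x)"
  unfolding supported_def by (auto simp: coords_shift_op shift_rev_arc inA_rev_arc)

lemma supported_coin_op: "supported x \<Longrightarrow> supported (coin_op x)"
  using closed_span_local_form[OF span_proj(1), THEN local_form_supported]
  unfolding coin_op_def supported_def by simp

lemma supported_walk_op: "supported (walk_op x)"
  unfolding walk_op_def by (intro supported_shift_op supported_coin_op supported_restrict_A)

text \<open>The shift permutes the arcs of A, the coin is a reflection, and the restriction to A is
  a contraction; hence the walk operator is a complex-linear contraction.\<close>
lemma norm_shift_op: "supported x \<Longrightarrow> norm (shift_op x) = norm x"
proof -
  assume "supported x"
  hence "coords (shift_op x) = (\<lambda>a. coords x (rev_arc a))"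
    by (auto simp: coords_shift_op shift_rev_arc supported_def)
  moreover have "sqnorm (\<lambda>a. coords x (rev_arc a)) = sqnorm (coords x)"
    unfolding sqnorm_def using infsum_reindex_bij_betw[OF bij_rev_arc, of "\<lambda>a. (cmod (coords x a))^2"]
    by simp
  ultimately show ?thesis by (simp add: norm_ell2_sqnorm)
qed

lemma norm_coin_op: "norm (coin_op x) = norm x"
proof -
  have "inner (span_proj x) (x - span_proj x) = 0"
    using span_proj(2)[of x] span_proj(1)[of x] by (simp add: inner_cinner)
  hence "inner (span_proj x) x = (norm (span_proj x))^2"
    by (simp add: inner_diff_right power2_norm_eq_inner)
  hence "(norm (coin_op x))^2 = (norm x)^2"
    by (simp add: coin_op_def power2_norm_eq_inner inner_diff_left inner_diff_right
        inner_commute[of x "span_proj x"] algebra_simps)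
  thus ?thesis by (simp add: power2_eq_iff_nonneg)
qed

lemma norm_restrict_A: "norm (restrict_A x) \<le> norm x"
proof -
  have "sqnorm (coords (restrict_A x)) \<le> sqnorm (coords x)" unfolding sqnorm_def
    using square_summable_coords[of "restrict_A x"] square_summable_coords[of x]
    by (intro infsum_mono) (auto simp: square_summable_def coords_restrict_A)
  thus ?thesis by (simp add: norm_ell2_sqnorm)
qed

lemma restrict_A_add: "restrict_A (x + y) = restrict_A x + restrict_A y"
  and restrict_A_cscale: "restrict_A (cscale c x) = cscale c (restrict_A x)"
  by (auto intro!: ell2_eqI simp: coords_restrict_A)

lemma shift_op_add: "shift_op (x + y) = shift_op x + shift_op y"
  and shift_op_cscale: "shift_op (cscale c x) = cscale c (shift_op x)"
  by (auto intro!: ell2_eqI simp: coords_shift_op shift_rev_arc)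

lemma rev_arc_eq_Larc_0: "rev_arc a = Larc 0 \<longleftrightarrow> a = Larc 0"
  by (cases a rule: rev_arc.cases) auto

lemma shift_op_involutive: "supported x \<Longrightarrow> shift_op (shift_op x) = x"
  by (rule ell2_eqI) (auto simp: coords_shift_op shift_rev_arc supported_def rev_arc_eq_Larc_0)

lemma coin_op_add: "coin_op (x + y) = coin_op x + coin_op y"
  and coin_op_cscale: "coin_op (cscale c x) = cscale c (coin_op x)"
  by (simp_all add: coin_op_def span_proj_add span_proj_cscale scaleR_add_right
      cscale_diff scaleR_cscale cscale_cscale cscale_add mult.commute)

sublocale walk: ell2_contraction walk_op
proof
  fix x y c
  show "walk_op (x + y) = walk_op x + walk_op y" "walk_op (cscale c x) = cscale c (walk_op x)"
    by (simp_all add: walk_op_def restrict_A_add restrict_A_cscale shift_op_add shift_op_cscale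
        coin_op_add coin_op_cscale)
  show "norm (walk_op x) \<le> norm x"
    using norm_restrict_A[of x]
    by (simp add: walk_op_def norm_shift_op supported_coin_op supported_restrict_A norm_coin_op)
qed

lemma Uop_walk_op: assumes "in_l2 r \<psi>" shows "Uop p q r \<psi> = coords (walk_op (ell2_of \<psi>))"
proof -
  have sq: "square_summable \<psi>" and zero: "\<And>a. \<not> inA r a \<Longrightarrow> \<psi> a = 0"
    using assms by (auto simp: in_l2_iff)
  have "restrict_A (ell2_of \<psi>) = ell2_of \<psi>"
    by (rule ell2_eqI) (auto simp: coords_restrict_A coords_ell2_of[OF sq] zero)
  moreover have "coin p q r \<psi> = coords (coin_op (ell2_of \<psi>))"
    by (rule ext) (simp add: coin_def coin_op_def projA_eq[OF sq] coords_ell2_of[OF sq])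
  ultimately show ?thesis by (simp add: Uop_def walk_op_def coords_shift_op)
qed

lemma Uop_power: assumes "in_l2 r \<psi>" shows "(Uop p q r ^^ t) \<psi> = coords ((walk_op ^^ t) (ell2_of \<psi>))"
proof (induction t)
  case 0 thus ?case using assms by (simp add: in_l2_iff coords_ell2_of)
next
  case (Suc t)
  have "in_l2 r (coords ((walk_op ^^ t) (ell2_of \<psi>)))"
  proof (cases t)
    case 0 thus ?thesis using assms by (simp add: in_l2_iff coords_ell2_of)
  next
    case (Suc n) thus ?thesis using supported_walk_op by (simp add: in_l2_iff supported_def)
  qed
  thus ?case using Suc by (simp add: Uop_walk_op)
qed

abbreviation stat :: "nat \<Rightarrow> real" where "stat \<equiv> pi_stat p q"

lemma wgt_pos: "wgt p q j > 0"
proof -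
  have "(\<Prod>k<j. p k) > 0" using ppos by (intro prod_pos) auto
  moreover have "(\<Prod>k\<in>{1..j}. q k) > 0" using qpos by (intro prod_pos) auto
  ultimately show ?thesis by (simp add: wgt_def)
qed

lemma wgt_Suc: "wgt p q (Suc j) * q (Suc j) = wgt p q j * p j"
proof -
  have "(\<Prod>k\<in>{1..Suc j}. q k) = q (Suc j) * (\<Prod>k\<in>{1..j}. q k)"
    by (simp add: atLeastAtMostSuc_conv)
  thus ?thesis using qpos[of "Suc j"] by (simp add: wgt_def field_simps)
qed

lemma C_R_nonneg: "C_R p q \<ge> 0"
  unfolding C_R_def using pos_rec wgt_pos by (intro suminf_nonneg) (auto simp: less_imp_le)

lemma stat_eq: "stat j = wgt p q j / (1 + C_R p q)"
  by (cases "j = 0") (simp_all add: pi_stat_def wgt_def)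

lemma stat_pos: "stat j > 0"
  using wgt_pos C_R_nonneg by (simp add: stat_eq)

lemma sum_stat_le: "(\<Sum>j\<le>n. stat j) \<le> 1"
proof -
  have "(\<Sum>j\<le>n. wgt p q j) = wgt p q 0 + (\<Sum>j<n. wgt p q (Suc j))"
    by (simp only: lessThan_Suc_atMost[symmetric] sum.lessThan_Suc_shift)
  also have "(\<Sum>j<n. wgt p q (Suc j)) \<le> C_R p q"
    unfolding C_R_def using pos_rec wgt_pos by (intro sum_le_suminf) (auto simp: less_imp_le)
  finally have "(\<Sum>j\<le>n. wgt p q j) \<le> 1 + C_R p q" by (simp add: wgt_def)
  thus ?thesis using C_R_nonneg by (simp add: stat_eq sum_divide_distrib[symmetric])
qed

text \<open>\<open>Phi = \<Sum>_j sqrt(stat j) a_j\<close>: on the arcs out of \<open>j\<close> it is \<open>sqrt(stat j) a_j\<close>.\<close>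
definition phi_coords :: "arc \<Rightarrow> complex" where
  "phi_coords b = (if inA r b then complex_of_real (cf b * sqrt (stat (origin b))) else 0)"

lemma phi_coords_sq: "b \<in> out_arcs j \<Longrightarrow> (cmod (phi_coords b))^2 = (cf b)^2 * stat j"
  using stat_pos[of j] cf_nonneg[of b]
  by (simp add: phi_coords_def in_out_arcs norm_mult power_mult_distrib less_imp_le del: of_real_mult)

lemma sum_phi_coords_sq: "(\<Sum>b\<in>out_arcs j. (cmod (phi_coords b))^2) = stat j"
  by (simp add: phi_coords_sq sum_distrib_right[symmetric] cf_sq_sum)

lemma phi_coords_finite_sums: "finite F \<Longrightarrow> (\<Sum>b\<in>F. (cmod (phi_coords b))^2) \<le> 1"
proof -
  assume "finite F"
  define n where "n = Max (insert 0 (origin ` F))"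
  define G where "G = (\<Union>j\<le>n. out_arcs j)"
  have "finite G" by (simp add: G_def)
  have outside: "phi_coords b = 0" if "b \<in> F - G" for b
    using that \<open>finite F\<close> by (auto simp: G_def in_out_arcs n_def phi_coords_def)
  have "(\<Sum>b\<in>F. (cmod (phi_coords b))^2) = (\<Sum>b\<in>F \<inter> G. (cmod (phi_coords b))^2)"
    using \<open>finite F\<close> outside by (intro sum.mono_neutral_right) auto
  also have "\<dots> \<le> (\<Sum>b\<in>G. (cmod (phi_coords b))^2)"
    using \<open>finite G\<close> by (intro sum_mono2) auto
  also have "\<dots> = (\<Sum>j\<le>n. \<Sum>b\<in>out_arcs j. (cmod (phi_coords b))^2)"
    unfolding G_def by (rule sum.UNION_disjoint) (auto simp: in_out_arcs)
  also have "\<dots> = (\<Sum>j\<le>n. stat j)" by (simp add: sum_phi_coords_sq)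
  also have "\<dots> \<le> 1" by (rule sum_stat_le)
  finally show ?thesis .
qed

definition Phi :: "arc ell2" where "Phi = ell2_of phi_coords"

lemma coords_Phi: "coords Phi = phi_coords"
  using square_summable_bounded(1)[OF phi_coords_finite_sums] by (simp add: Phi_def coords_ell2_of)

lemma norm_Phi_le: "norm Phi \<le> 1"
  using square_summable_bounded(2)[OF phi_coords_finite_sums] by (simp add: norm_ell2_sqnorm coords_Phi)

lemma Phi_nonzero: "Phi \<noteq> 0"
proof
  assume "Phi = 0"
  hence "phi_coords (Rarc 0) = 0" by (metis coords_Phi zero_ell2.rep_eq)
  thus False using ppos[of 0] stat_pos[of 0] by (simp add: phi_coords_def)
qed

lemma amp_Phi: "amp j Phi = complex_of_real (sqrt (stat j))"
proof -
  have "amp j Phi = (\<Sum>b\<in>out_arcs j. complex_of_real ((cf b)^2 * sqrt (stat j)))"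
    unfolding amp_def coords_Phi
    by (rule sum.cong) (auto simp: phi_coords_def in_out_arcs power2_eq_square)
  also have "\<dots> = complex_of_real (sqrt (stat j))"
    by (simp only: of_real_sum[symmetric] sum_distrib_right[symmetric] cf_sq_sum) simp
  finally show ?thesis .
qed

lemma Phi_closed_span: "Phi \<in> closed_span"
  by (rule local_form_closed_span) (auto simp: local_form_def coords_Phi amp_Phi phi_coords_def)

lemma supported_Phi: "supported Phi"
  by (simp add: supported_def coords_Phi phi_coords_def)

text \<open>By detailed balance \<open>Phi\<close> takes the same value on an arc and on its reversal, so it is
  invariant under the shift.\<close>
lemma phi_coords_rev_arc: "phi_coords (rev_arc a) = phi_coords a"
proof -
  have balance: "sqrt (q (Suc j)) * sqrt (stat (Suc j)) = sqrt (p j) * sqrt (stat j)" for j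
    using wgt_Suc[of j] by (simp add: stat_eq field_simps flip: real_sqrt_mult)
  show ?thesis by (cases a rule: rev_arc.cases) (auto simp: phi_coords_def balance)
qed

lemma phi_coords_Larc_0: "phi_coords (Larc 0) = 0"
  by (simp add: phi_coords_def)

lemma shift_op_Phi: "shift_op Phi = Phi"
  by (rule ell2_eqI) (simp add: coords_shift_op shift_rev_arc coords_Phi phi_coords_rev_arc phi_coords_Larc_0)

lemma walk_op_Phi: "walk_op Phi = Phi"
  by (simp add: walk_op_def restrict_A_supported[OF supported_Phi] coin_op_def
      span_proj_id[OF Phi_closed_span] scaleR_2 shift_op_Phi)

text \<open>\<open>\<langle>Phi, U w\<rangle> = \<langle>Phi, w\<rangle>\<close>: each factor of \<open>U\<close> is self-adjoint and fixes \<open>Phi\<close>.\<close>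
lemma cinner_Phi_walk_op: "cinner Phi (walk_op w) = cinner Phi w"
proof -
  have shift: "cinner Phi (shift_op y) = cinner Phi y" for y
  proof -
    have "cinner Phi (shift_op y) = infsum (\<lambda>a. cnj (phi_coords (rev_arc a)) * coords y (rev_arc a)) UNIV"
      unfolding cinner.rep_eq fun_inner_def coords_Phi coords_shift_op
      by (rule infsum_cong) (simp add: shift_rev_arc phi_coords_rev_arc phi_coords_Larc_0)
    also have "\<dots> = cinner Phi y"
      unfolding cinner.rep_eq fun_inner_def coords_Phi
      by (rule infsum_reindex_bij_betw[OF bij_rev_arc, of "\<lambda>a. cnj (phi_coords a) * coords y a"])
    finally show ?thesis .
  qed
  have restrict: "cinner Phi (restrict_A y) = cinner Phi y" for y
    unfolding cinner.rep_eq fun_inner_def coords_Phi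
    by (rule infsum_cong) (auto simp: coords_restrict_A phi_coords_def)
  have coin: "cinner Phi (coin_op y) = cinner Phi y" for y
  proof -
    have "cinner Phi (span_proj y) = cinner Phi y"
      using span_proj(2)[of y] Phi_closed_span by (simp add: cinner_diff_right)
    thus ?thesis by (simp add: coin_op_def cinner_diff_right scaleR_cscale cinner_cscale_right)
  qed
  show ?thesis by (simp add: walk_op_def shift coin restrict)
qed

lemma amp_diff: "amp j (x - y) = amp j x - amp j y"
  by (simp add: amp_def algebra_simps sum_subtractf)

text \<open>A vector in local form taking equal values on mutually reversed arcs has amplitudes
  obeying detailed balance, \<open>sqrt(q(j+1)) X(j+1) = sqrt(p j) X j\<close>, hence is a multiple of \<open>Phi\<close>.\<close>
lemma symmetric_local_form_multiple:
  assumes lf: "local_form x" and sym: "\<And>j. coords x (Rarc j) = coords x (Larc (Suc j))"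
  shows "\<exists>k. x = cscale k Phi"
proof -
  define X where "X j = amp j x" for j
  have x_eq: "coords x b = (if inA r b then complex_of_real (cf b) * X (origin b) else 0)" for b
    using lf by (simp add: local_form_def X_def)
  have balance: "complex_of_real (sqrt (q (Suc j))) * X (Suc j) = complex_of_real (sqrt (p j)) * X j" for j
    using sym[of j] by (simp add: x_eq)
  have X_eq: "X j = X 0 * complex_of_real (sqrt (wgt p q j))" for j
  proof (induction j)
    case 0 thus ?case by (simp add: wgt_def)
  next
    case (Suc j)
    have w_eq: "sqrt (wgt p q j) * sqrt (p j) = sqrt (wgt p q (Suc j)) * sqrt (q (Suc j))"
      using wgt_Suc[of j] by (simp flip: real_sqrt_mult)
    have "complex_of_real (sqrt (q (Suc j))) * X (Suc j)
        = complex_of_real (sqrt (p j)) * (X 0 * complex_of_real (sqrt (wgt p q j)))"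
      using balance[of j] Suc by simp
    also have "\<dots> = X 0 * complex_of_real (sqrt (wgt p q j) * sqrt (p j))" by (simp add: mult_ac)
    also have "\<dots> = complex_of_real (sqrt (q (Suc j))) * (X 0 * complex_of_real (sqrt (wgt p q (Suc j))))"
      unfolding w_eq by (simp add: mult_ac)
    finally show ?case using qpos[of "Suc j"] by simp
  qed
  define k where "k = X 0 * complex_of_real (sqrt (1 + C_R p q))"
  have stat_sqrt: "sqrt (stat j) * sqrt (1 + C_R p q) = sqrt (wgt p q j)" for j
    using C_R_nonneg by (simp add: stat_eq real_sqrt_divide)
  have "coords x b = coords (cscale k Phi) b" for b
  proof (cases "inA r b")
    case True
    have "coords (cscale k Phi) b
        = X 0 * complex_of_real (cf b) * complex_of_real (sqrt (stat (origin b)) * sqrt (1 + C_R p q))"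
      using True by (simp add: coords_Phi phi_coords_def k_def mult_ac)
    also have "\<dots> = coords x b"
      unfolding stat_sqrt using True by (simp add: x_eq X_eq[of "origin b"] mult_ac)
    finally show ?thesis by simp
  qed (simp add: x_eq coords_Phi phi_coords_def)
  thus ?thesis by (blast intro: ell2_eqI)
qed

text \<open>The only vector in the orthogonal complement of all \<open>a_j\<close> that the shift maps to its
  negative is 0: walking along the half line from the origin, orthogonality to \<open>a_j\<close> and
  antisymmetry successively force every coordinate to vanish.\<close>
lemma antisymmetric_orthogonal_zero:
  assumes sup: "supported z" and anti: "shift_op z = - z" and orth: "\<And>j. amp j z = 0"
  shows "z = 0"
proof -
  have anti_coords: "coords z (rev_arc a) = - coords z a" if "a \<noteq> Larc 0" for a
    using arg_cong[OF anti, of "\<lambda>x. coords x a"] that by (simp add: coords_shift_op shift_rev_arc)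
  have O: "coords z (Oarc j) = 0" for j using anti_coords[of "Oarc j"] by simp
  have RL: "coords z (Larc (Suc j)) = - coords z (Rarc j)" for j using anti_coords[of "Rarc j"] by simp
  have L: "coords z (Larc j) = 0" for j
  proof (induction j)
    case 0 thus ?case using sup by (simp add: supported_def)
  next
    case (Suc j)
    have "amp j z = complex_of_real (sqrt (p j)) * coords z (Rarc j)"
      by (simp add: amp_def sum_out_arcs Suc O)
    hence "complex_of_real (sqrt (p j)) * coords z (Rarc j) = 0" using orth[of j] by simp
    thus ?case using ppos[of j] RL[of j] by simp
  qed
  have "coords z b = 0" for b
    by (cases b) (use O L RL in \<open>simp_all add: neg_equal_0_iff_equal\<close>)
  thus ?thesis by (intro ell2_eqI) simp
qed

text \<open>From \<open>y = S(2 P y - y)\<close>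
  (\<open>P\<close> the projection) the vector \<open>P y\<close> is symmetric under arc reversal, hence equals
  \<open>k Phi\<close>; then \<open>y - k Phi\<close> is antisymmetric and orthogonal to all \<open>a_j\<close>, hence 0.\<close>
theorem walk_fixed_points:
  assumes fixed: "walk_op y = y" shows "\<exists>k. y = cscale k Phi"
proof -
  have sup: "supported y" using supported_walk_op[of y] fixed by simp
  define P where "P = span_proj y"
  have y_eq: "y = shift_op (2 *\<^sub>R P - y)"
    using fixed by (simp add: walk_op_def restrict_A_supported[OF sup] coin_op_def P_def)
  have "supported (2 *\<^sub>R P - y)" using supported_coin_op[OF sup] by (simp add: coin_op_def P_def)
  hence shift_y: "shift_op y = 2 *\<^sub>R P - y" using y_eq shift_op_involutive by metis
  have "coords y (Rarc j) + coords y (Larc (Suc j)) = 2 * coords P (Larc (Suc j))"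
    and "coords y (Larc (Suc j)) + coords y (Rarc j) = 2 * coords P (Rarc j)" for j
    using arg_cong[OF shift_y, of "\<lambda>x. coords x (Rarc j)"]
      arg_cong[OF shift_y, of "\<lambda>x. coords x (Larc (Suc j))"]
    by (simp_all add: coords_shift_op algebra_simps)
  hence "coords P (Rarc j) = coords P (Larc (Suc j))" for j by (metis add.commute mult_left_cancel zero_neq_numeral)
  then obtain k where Pk: "P = cscale k Phi"
    using symmetric_local_form_multiple closed_span_local_form[OF span_proj(1)] P_def by blast
  define z where "z = y - cscale k Phi"
  have "supported z" using sup supported_Phi by (simp add: z_def supported_def)
  moreover have "shift_op z = - z"
    using shift_y shift_op_add[of z "cscale k Phi"]
    by (simp add: z_def Pk shift_op_cscale shift_op_Phi scaleR_2 algebra_simps)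
  moreover have "amp j z = 0" for j
    using amp_span_proj[of j y] by (simp add: z_def amp_diff Pk[symmetric] P_def)
  ultimately have "z = 0" by (rule antisymmetric_orthogonal_zero)
  thus ?thesis unfolding z_def by auto
qed

sublocale walk_invariant: ell2_contraction_invariant walk_op Phi
  by unfold_locales (simp_all add: walk_op_Phi cinner_Phi_walk_op walk_fixed_points Phi_nonzero)

lemma time_avg_eq:
  assumes supp: "\<forall>a. \<Psi>0 a \<noteq> 0 \<longrightarrow> inA r a \<and> origin a = j"
  shows "time_avg p q r \<Psi>0 i
    = (\<lambda>T. (\<Sum>t<T. local_mass ((walk_op ^^ t) (ell2_of \<Psi>0)) (out_arcs i)) / real T)"
proof -
  have "square_summable \<Psi>0"
    by (rule square_summable_finite_support[of "out_arcs j"]) (use supp in \<open>auto simp: in_out_arcs\<close>)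
  hence "in_l2 r \<Psi>0" using supp by (auto simp: in_l2_iff)
  thus ?thesis
    by (intro ext) (simp add: time_avg_def probX_def Uop_power local_mass_def out_arcs_def)
qed

lemma cinner_Phi_local:
  assumes supp: "\<forall>a. \<Psi>0 a \<noteq> 0 \<longrightarrow> inA r a \<and> origin a = j"
  shows "cinner Phi (ell2_of \<Psi>0) = complex_of_real (sqrt (stat j)) * l2_inner (avec p q r j) \<Psi>0"
proof -
  have zero: "\<Psi>0 a = 0" if "a \<notin> out_arcs j" for a using supp that by (auto simp: in_out_arcs)
  hence "square_summable \<Psi>0" by (intro square_summable_finite_support[of "out_arcs j"]) auto
  hence "cinner Phi (ell2_of \<Psi>0) = (\<Sum>b\<in>out_arcs j. cnj (phi_coords b) * \<Psi>0 b)"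
    unfolding cinner.rep_eq fun_inner_def coords_Phi
    by (simp add: coords_ell2_of infsum_finite_support[of "out_arcs j"] zero)
  also have "\<dots> = complex_of_real (sqrt (stat j)) * (\<Sum>b\<in>out_arcs j. cnj (avec p q r j b) * \<Psi>0 b)"
    unfolding sum_distrib_left by (rule sum.cong) (auto simp: phi_coords_def avec_eq in_out_arcs)
  also have "(\<Sum>b\<in>out_arcs j. cnj (avec p q r j b) * \<Psi>0 b) = l2_inner (avec p q r j) \<Psi>0"
    unfolding l2_inner_def by (rule infsum_finite_support[symmetric]) (auto simp: avec_eq)
  finally show ?thesis .
qed

text \<open>The limit exists by the tensor-square
  argument; the lower bound \<open>|\<langle>Phi, \<Psi>0\<rangle>|\<^sup>2 / |Phi|\<^sup>4 \<cdot> \<pi>(i)\<close> from the invariant vector is at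
  least the claimed one since \<open>\<langle>Phi, \<Psi>0\<rangle> = sqrt(\<pi>(j)) \<langle>a_j, \<Psi>0\<rangle>\<close> and \<open>|Phi| \<le> 1\<close>.\<close>
theorem time_average_lower_bound:
  assumes supp: "\<forall>a. \<Psi>0 a \<noteq> 0 \<longrightarrow> inA r a \<and> origin a = j"
  shows "\<exists>L. time_avg p q r \<Psi>0 i \<longlonglongrightarrow> L \<and>
           L \<ge> (cmod (l2_inner (avec p q r j) \<Psi>0))^2 * stat i * stat j"
proof -
  let ?c = "(cmod (l2_inner (avec p q r j) \<Psi>0))^2"
  obtain L where lim: "time_avg p q r \<Psi>0 i \<longlonglongrightarrow> L"
    unfolding time_avg_eq[OF supp] using walk.local_mass_average_converges by blast
  have "local_mass Phi (out_arcs i) = stat i"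
    by (simp add: local_mass_def coords_Phi sum_phi_coords_sq)
  moreover have "(cmod (cinner Phi (ell2_of \<Psi>0)))^2 = stat j * ?c"
    using stat_pos[of j] by (simp add: cinner_Phi_local[OF supp] norm_mult power_mult_distrib)
  moreover have "L \<ge> (cmod (cinner Phi (ell2_of \<Psi>0)))^2 / (norm Phi)^4 * local_mass Phi (out_arcs i)"
    by (rule walk_invariant.local_mass_average_lower_bound[OF lim[unfolded time_avg_eq[OF supp]]])
  ultimately have bound: "L \<ge> stat j * ?c / (norm Phi)^4 * stat i" by simp
  have "0 < (norm Phi)^4" "(norm Phi)^4 \<le> 1" using Phi_nonzero norm_Phi_le by (simp_all add: power_le_one)
  hence "stat j * ?c \<le> stat j * ?c / (norm Phi)^4"
    using stat_pos[of j] by (simp add: le_divide_eq mult_left_le)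
  hence "(stat j * ?c) * stat i \<le> stat j * ?c / (norm Phi)^4 * stat i"
    using stat_pos[of i] by (intro mult_right_mono) auto
  hence "?c * stat i * stat j \<le> stat j * ?c / (norm Phi)^4 * stat i"
    by (simp only: mult.commute mult.left_commute)
  thus ?thesis using lim bound by auto
qed

corollary localization: "\<exists>L. time_avg p q r (avec p q r j) i \<longlonglongrightarrow> L \<and> L > 0"
proof -
  have supp: "\<forall>a. avec p q r j a \<noteq> 0 \<longrightarrow> inA r a \<and> origin a = j" by (simp add: avec_def)
  have "l2_inner (avec p q r j) (avec p q r j) = (\<Sum>b\<in>out_arcs j. complex_of_real ((cf b)^2))"
    unfolding l2_inner_def
    by (subst infsum_finite_support[of "out_arcs j"]) (auto simp: avec_eq power2_eq_square intro: sum.cong)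
  hence "l2_inner (avec p q r j) (avec p q r j) = 1"
    by (simp only: of_real_sum[symmetric] cf_sq_sum) simp
  moreover obtain L where "time_avg p q r (avec p q r j) i \<longlonglongrightarrow> L"
    and "L \<ge> (cmod (l2_inner (avec p q r j) (avec p q r j)))^2 * stat i * stat j"
    using time_average_lower_bound[OF supp, of i] by blast
  moreover have "stat i * stat j > 0" using stat_pos by simp
  ultimately show ?thesis by auto
qed

end

theorem theorem1:
  fixes p q r :: "nat \<Rightarrow> real"
  assumes nonneg: "\<And>j. p j \<ge> 0 \<and> q j \<ge> 0 \<and> r j \<ge> 0"
    and sum1: "\<And>j. p j + q j + r j = 1"
    and q0: "q 0 = 0"
    and ppos: "\<And>j. p j > 0"
    and qpos: "\<And>j. j \<ge> 1 \<Longrightarrow> q j > 0"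
    and pos_rec: "summable (\<lambda>n. wgt p q (Suc n))"
  shows "(\<forall>j \<Psi>0 i. (\<forall>a. \<Psi>0 a \<noteq> 0 \<longrightarrow> inA r a \<and> origin a = j) \<and> l2_norm \<Psi>0 = 1 \<longrightarrow>
           (\<exists>L. time_avg p q r \<Psi>0 i \<longlonglongrightarrow> L \<and>
                L \<ge> (cmod (l2_inner (avec p q r j) \<Psi>0))^2 * pi_stat p q i * pi_stat p q j))
       \<and> (\<forall>j i. \<exists>L. time_avg p q r (avec p q r j) i \<longlonglongrightarrow> L \<and> L > 0)"
proof -
  interpret birth_death p q r by unfold_locales (fact assms)+
  show ?thesis
  proof (intro conjI allI impI)
    fix j \<Psi>0 i
    assume "(\<forall>a. \<Psi>0 a \<noteq> 0 \<longrightarrow> inA r a \<and> origin a = j) \<and> l2_norm \<Psi>0 = 1"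
    thus "\<exists>L. time_avg p q r \<Psi>0 i \<longlonglongrightarrow> L \<and>
        L \<ge> (cmod (l2_inner (avec p q r j) \<Psi>0))^2 * pi_stat p q i * pi_stat p q j"
      using time_average_lower_bound by blast
  qed (rule localization)
qed

end
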